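(* For $n\in\mathbb{N}$ put $E_n(X):=e^{nX}$ and $L_n(X):=\dfrac{e^{X}q^{n}}{1-e^{X}q^{n}}\in\mathbb{Q}[[q,X]]$. For every $l\ge 1$ the generating series of bi-brackets (defined in the context) satisfies \[ T\binom{X_1,\dots,X_l}{Y_1,\dots,Y_l}=\sum_{u_1>\dots>u_l>0}\prod_{j=1}^{l}E_{u_j}(Y_j)\,L_{u_j}(X_j) =\sum_{u_1>\dots>u_l>0}\prod_{j=1}^{l}E_{u_j}(X_{l+1-j}-X_{l+2-j})\,L_{u_j}(Y_1+\dots+Y_{l-j+1}), \] where $X_{l+1}:=0$. In particular the partition relation holds: \[ T\binom{X_1,\dots,X_l}{Y_1,\dots,Y_l}=T\binom{Y_1+\dots+Y_l,\ \dots,\ Y_1+Y_2,\ Y_1}{X_l,\ X_{l-1}-X_l,\ \dots,\ X_1-X_2}. \]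
   Context: For integers $s_1,\dots,s_l\ge1$ and $r_1,\dots,r_l\ge0$ the bi-bracket is the $q$-series \[ \binom{s_1,\dots,s_l}{r_1,\dots,r_l}:=\sum_{\substack{u_1>\dots>u_l>0\\ v_1,\dots,v_l>0}}\prod_{j=1}^{l}\frac{u_j^{r_j}}{r_j!}\,\frac{v_j^{s_j-1}}{(s_j-1)!}\;q^{u_1v_1+\dots+u_lv_l}\in\mathbb{Q}[[q]]. \] Its generating series is \[ T\binom{X_1,\dots,X_l}{Y_1,\dots,Y_l}:=\sum_{\substack{s_1,\dots,s_l>0\\ r_1,\dots,r_l>0}}\binom{s_1,\dots,s_l}{r_1-1,\dots,r_l-1}X_1^{s_1-1}\cdots X_l^{s_l-1}\,Y_1^{r_1-1}\cdots Y_l^{r_l-1}, \] a formal power series in $X_1,\dots,X_l,Y_1,\dots,Y_l$ with coefficients in $\mathbb{Q}[[q]]$. All identities are identities of formal power series in $q$ and the variables. *)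

theory Defs
  imports "HOL-Library.Poly_Mapping" "HOL-Computational_Algebra.Formal_Power_Series"
begin

datatype var = Q | X nat | Y nat

text \<open>A monomial is a finitely supported exponent vector; a formal power series
  (with rational coefficients) is its coefficient function on monomials.\<close>
type_synonym mono = "var \<Rightarrow>\<^sub>0 nat"
type_synonym mps = "mono \<Rightarrow> rat"

definition mps_const :: "rat \<Rightarrow> mps" where
  "mps_const c = (\<lambda>m. if m = 0 then c else 0)"

definition mps_var :: "var \<Rightarrow> mps" where
  "mps_var v = (\<lambda>m. if m = Poly_Mapping.single v 1 then 1 else 0)"

definition mps_add :: "mps \<Rightarrow> mps \<Rightarrow> mps" where
  "mps_add f g = (\<lambda>m. f m + g m)"

definition mps_smult :: "rat \<Rightarrow> mps \<Rightarrow> mps" where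
  "mps_smult c f = (\<lambda>m. c * f m)"

definition mps_sub :: "mps \<Rightarrow> mps \<Rightarrow> mps" where
  "mps_sub f g = (\<lambda>m. f m - g m)"

definition mps_mult :: "mps \<Rightarrow> mps \<Rightarrow> mps" where
  "mps_mult f g = (\<lambda>m. \<Sum>p\<in>{p. fst p + snd p = m}. f (fst p) * g (snd p))"

definition mps_power :: "mps \<Rightarrow> nat \<Rightarrow> mps" where
  "mps_power f k = ((mps_mult f) ^^ k) (mps_const 1)"

definition mps_listprod :: "mps list \<Rightarrow> mps" where
  "mps_listprod fs = foldr mps_mult fs (mps_const 1)"

definition mps_listsum :: "mps list \<Rightarrow> mps" where
  "mps_listsum fs = foldr mps_add fs (mps_const 0)"

text \<open>Sum of a (possibly infinite) family, taken coefficientwise (formal convergence: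
  each coefficient receives only finitely many nonzero contributions).\<close>
definition mps_sum :: "('i \<Rightarrow> mps) \<Rightarrow> 'i set \<Rightarrow> mps" where
  "mps_sum F I = (\<lambda>m. \<Sum>i\<in>{i\<in>I. F i m \<noteq> 0}. F i m)"

text \<open>Exponential of a series without constant term.\<close>
definition mps_exp :: "mps \<Rightarrow> mps" where
  "mps_exp f = mps_sum (\<lambda>k. mps_smult (1 / fact k) (mps_power f k)) UNIV"

text \<open>Multiplicative inverse of a series with constant term 1: f^(-1) = sum_k (1 - f)^k.\<close>
definition mps_inverse :: "mps \<Rightarrow> mps" where
  "mps_inverse f = mps_sum (\<lambda>k. mps_power (mps_sub (mps_const 1) f) k) UNIV"

text \<open>Substitution of series (without constant term) for the variables.\<close>
definition mono_eval :: "(var \<Rightarrow> mps) \<Rightarrow> mono \<Rightarrow> mps" where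
  "mono_eval \<sigma> m = Finite_Set.fold (\<lambda>v acc. mps_mult (mps_power (\<sigma> v) (Poly_Mapping.lookup m v)) acc)
      (mps_const 1) (Poly_Mapping.keys m)"

definition mps_subst :: "(var \<Rightarrow> mps) \<Rightarrow> mps \<Rightarrow> mps" where
  "mps_subst \<sigma> f = mps_sum (\<lambda>m. mps_smult (f m) (mono_eval \<sigma> m)) UNIV"

definition En :: "nat \<Rightarrow> mps \<Rightarrow> mps" where
  "En n Z = mps_exp (mps_smult (of_nat n) Z)"

definition Ln :: "nat \<Rightarrow> mps \<Rightarrow> mps" where
  "Ln n Z = (let w = mps_mult (mps_exp Z) (mps_power (mps_var Q) n)
             in mps_mult w (mps_inverse (mps_sub (mps_const 1) w)))"

text \<open>Bi-bracket with s = [s_1,...,s_l], r = [r_1,...,r_l] (list index 0 is index 1).\<close>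
definition bibracket :: "nat list \<Rightarrow> nat list \<Rightarrow> rat fps" where
  "bibracket s r = Abs_fps (\<lambda>N.
     \<Sum>(u, v)\<in>{(u, v). length u = length s \<and> length v = length s
                      \<and> sorted_wrt (>) u \<and> (\<forall>x\<in>set u. 0 < x) \<and> (\<forall>x\<in>set v. 0 < x)
                      \<and> (\<Sum>j<length s. u ! j * v ! j) = N}.
       \<Prod>j<length s. (of_nat (u ! j)) ^ (r ! j) / fact (r ! j)
                    * (of_nat (v ! j)) ^ (s ! j - 1) / fact (s ! j - 1))"

text \<open>Generating series T in the variables q, X_1..X_l, Y_1..Y_l: the coefficient of
  q^N X^a Y^b is the q^N-coefficient of the bi-bracket with s_j = a_j + 1, r_j - 1 = b_j.\<close>
definition Tgen :: "nat \<Rightarrow> mps" where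
  "Tgen l = (\<lambda>m. if Poly_Mapping.keys m \<subseteq> {Q} \<union> {X j |j. 1 \<le> j \<and> j \<le> l} \<union> {Y j |j. 1 \<le> j \<and> j \<le> l}
     then fps_nth (bibracket (map (\<lambda>j. Poly_Mapping.lookup m (X j) + 1) [1..<l+1])
                             (map (\<lambda>j. Poly_Mapping.lookup m (Y j)) [1..<l+1])) (Poly_Mapping.lookup m Q)
     else 0)"

text \<open>Index set u_1 > ... > u_l > 0 (u ! (j-1) = u_j).\<close>
definition decr_tuples :: "nat \<Rightarrow> nat list set" where
  "decr_tuples l = {u. length u = l \<and> sorted_wrt (>) u \<and> (\<forall>x\<in>set u. 0 < x)}"

definition Xv :: "nat \<Rightarrow> nat \<Rightarrow> mps" where
  "Xv l i = (if i = l + 1 then mps_const 0 else mps_var (X i))"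

definition Ysum :: "nat \<Rightarrow> mps" where
  "Ysum k = mps_listsum (map (\<lambda>i. mps_var (Y i)) [1..<k+1])"

end

theory Submission
  imports Defs
begin

text \<open>Every series in the theorem is a formally convergent sum of exponential monomials
  \<open>q^N exp (\<Sum>\<^sub>w c\<^sub>w w)\<close> (\<open>qexp\<close> below). Expanding \<open>L\<^sub>u(Z) = \<Sum>\<^sub>k\<^sub>>\<^sub>0 e^(kZ) q^(ku)\<close> turns the
  first sum into the sum of \<open>q^(u\<^sub>1v\<^sub>1 + \<dots> + u\<^sub>lv\<^sub>l) exp (u\<^sub>1Y\<^sub>1 + v\<^sub>1X\<^sub>1 + \<dots> + u\<^sub>lY\<^sub>l + v\<^sub>lX\<^sub>l)\<close>
  over \<open>u\<^sub>1 > \<dots> > u\<^sub>l > 0\<close> and \<open>v\<^sub>1, \<dots>, v\<^sub>l > 0\<close>, and the coefficient of \<open>X^(s-1) Y^r\<close> in it is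
  the summand of the bi-bracket. Sending \<open>(u, v)\<close> to (partial sums of \<open>v\<close>, gaps of \<open>u\<close>) is an
  involution of this index set which preserves \<open>u\<^sub>1v\<^sub>1 + \<dots> + u\<^sub>lv\<^sub>l\<close> (summation by parts) and
  transforms the exponent into the one of the second sum. The substitution in the partition
  relation is linear in the variables, so it maps exponential monomials to exponential
  monomials, acting on the index set by the same involution.\<close>

abbreviation lookup where "lookup \<equiv> Poly_Mapping.lookup"
abbreviation keys where "keys \<equiv> Poly_Mapping.keys"

lemma finite_keys_subset_lookup_le:
  assumes "finite K"
  shows "finite {a::'a \<Rightarrow>\<^sub>0 nat. keys a \<subseteq> K \<and> (\<forall>w. lookup a w \<le> D w)}"
proof -
  let ?A = "{a::'a \<Rightarrow>\<^sub>0 nat. keys a \<subseteq> K \<and> (\<forall>w. lookup a w \<le> D w)}"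
  let ?f = "\<lambda>a::'a \<Rightarrow>\<^sub>0 nat. restrict (lookup a) K"
  have "inj_on ?f ?A"
  proof (rule inj_onI)
    fix a b assume a: "a \<in> ?A" and b: "b \<in> ?A" and eq: "?f a = ?f b"
    show "a = b"
    proof (rule poly_mapping_eqI)
      fix w show "lookup a w = lookup b w"
      proof (cases "w \<in> K")
        case True then show ?thesis using fun_cong[OF eq, of w] by simp
      next
        case False then have "w \<notin> keys a" "w \<notin> keys b" using a b by auto
        then show ?thesis by (simp add: in_keys_iff)
      qed
    qed
  qed
  moreover have "?f ` ?A \<subseteq> PiE K (\<lambda>w. {..D w})"
    by (auto simp: PiE_iff)
  then have "finite (?f ` ?A)"
    by (rule finite_subset) (simp add: assms finite_PiE)
  ultimately show ?thesis by (rule finite_imageD[rotated])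
qed

lemma finite_add_decompositions: "finite {p::('a \<Rightarrow>\<^sub>0 nat) \<times> ('a \<Rightarrow>\<^sub>0 nat). fst p + snd p = m}"
proof -
  let ?B = "{a::'a \<Rightarrow>\<^sub>0 nat. keys a \<subseteq> keys m \<and> (\<forall>w. lookup a w \<le> lookup m w)}"
  have "{p. fst p + snd p = m} \<subseteq> ?B \<times> ?B"
    by (auto simp: Poly_Mapping.lookup_add in_keys_iff)
  moreover have "finite (?B \<times> ?B)"
    using finite_keys_subset_lookup_le[of "keys m" "lookup m"] by simp
  ultimately show ?thesis by (rule finite_subset)
qed

lemma mps_mult_commute: "mps_mult f g = mps_mult g f"
proof
  fix m
  show "mps_mult f g m = mps_mult g f m"
    unfolding mps_mult_def
    by (rule sum.reindex_bij_witness[of _ prod.swap prod.swap]) (auto simp: add.commute)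
qed

lemma mps_mult_1_left: "mps_mult (mps_const 1) f = f"
proof
  fix m
  have "mps_mult (mps_const 1) f m = (\<Sum>p\<in>{p. fst p + snd p = m}. if p = (0, m) then f m else 0)"
    unfolding mps_mult_def mps_const_def
    by (rule sum.cong) (auto simp: prod_eq_iff)
  also have "\<dots> = f m" by (simp add: finite_add_decompositions)
  finally show "mps_mult (mps_const 1) f m = f m" .
qed

lemma mps_mult_smult_left: "mps_mult (mps_smult c f) g = mps_smult c (mps_mult f g)"
  by (auto simp: mps_mult_def mps_smult_def fun_eq_iff algebra_simps sum_distrib_left)

lemma mps_mult_smult_right: "mps_mult f (mps_smult c g) = mps_smult c (mps_mult f g)"
  by (simp add: mps_mult_commute[of f] mps_mult_smult_left)

lemma mps_mult_assoc: "mps_mult (mps_mult f g) h = mps_mult f (mps_mult g h)"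
proof
  fix m
  let ?P = "\<lambda>m::mono. {p::mono\<times>mono. fst p + snd p = m}"
  have "mps_mult (mps_mult f g) h m = (\<Sum>p\<in>?P m. \<Sum>q\<in>?P (fst p). f (fst q) * g (snd q) * h (snd p))"
    unfolding mps_mult_def by (simp add: sum_distrib_right)
  also have "\<dots> = (\<Sum>(p,q)\<in>Sigma (?P m) (\<lambda>p. ?P (fst p)). f (fst q) * g (snd q) * h (snd p))"
    by (rule sum.Sigma) (auto simp: finite_add_decompositions)
  also have "\<dots> = (\<Sum>(p,q)\<in>Sigma (?P m) (\<lambda>p. ?P (snd p)). f (fst p) * (g (fst q) * h (snd q)))"
    by (rule sum.reindex_bij_witness[of _ "\<lambda>((a,b),(c,d)). ((a+c,d),(a,c))" "\<lambda>((a,b),(c,d)). ((c,d+b),(d,b))"])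
       (auto simp: add.assoc mult.assoc)
  also have "\<dots> = (\<Sum>p\<in>?P m. \<Sum>q\<in>?P (snd p). f (fst p) * (g (fst q) * h (snd q)))"
    by (rule sum.Sigma[symmetric]) (auto simp: finite_add_decompositions)
  also have "\<dots> = mps_mult f (mps_mult g h) m"
    unfolding mps_mult_def by (simp add: sum_distrib_left)
  finally show "mps_mult (mps_mult f g) h m = mps_mult f (mps_mult g h) m" .
qed

lemma mps_mult_left_commute: "mps_mult a (mps_mult b z) = mps_mult b (mps_mult a z)"
  by (simp only: mps_mult_assoc[symmetric] mps_mult_commute[of a b])

lemma mps_mult_nonzeroE:
  assumes "mps_mult f g m \<noteq> 0"
  obtains a b where "a + b = m" "f a \<noteq> 0" "g b \<noteq> 0"
proof -
  from assms obtain p where "p \<in> {p. fst p + snd p = m}" "f (fst p) * g (snd p) \<noteq> 0"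
    unfolding mps_mult_def by (meson sum.not_neutral_contains_not_neutral)
  then show ?thesis using that by auto
qed

lemma mps_smult_0_left: "mps_smult 0 f = mps_const 0"
  by (simp add: mps_smult_def mps_const_def fun_eq_iff)

lemma mps_smult_smult: "mps_smult a (mps_smult b f) = mps_smult (a * b) f"
  by (simp add: mps_smult_def fun_eq_iff)

lemma mps_smult_1_left: "mps_smult 1 f = f"
  by (simp add: mps_smult_def fun_eq_iff)

section \<open>Locally finite families and their sums\<close>

definition mono_deg :: "mono \<Rightarrow> nat" where
  "mono_deg m = (\<Sum>w\<in>keys m. lookup m w)"

lemma mono_deg_eq_sum: "finite K \<Longrightarrow> keys m \<subseteq> K \<Longrightarrow> mono_deg m = (\<Sum>w\<in>K. lookup m w)"
  unfolding mono_deg_def by (rule sum.mono_neutral_left) (auto simp: in_keys_iff)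

lemma mono_deg_add: "mono_deg (a + b) = mono_deg a + mono_deg b"
proof -
  let ?K = "keys a \<union> keys b"
  have "mono_deg (a + b) = (\<Sum>w\<in>?K. lookup (a + b) w)"
    using keys_add[of a b] by (intro mono_deg_eq_sum) auto
  also have "\<dots> = (\<Sum>w\<in>?K. lookup a w) + (\<Sum>w\<in>?K. lookup b w)"
    by (simp add: Poly_Mapping.lookup_add sum.distrib)
  also have "\<dots> = mono_deg a + mono_deg b"
    by (simp add: mono_deg_eq_sum[of ?K])
  finally show ?thesis .
qed

lemma mono_deg_single: "mono_deg (Poly_Mapping.single w k) = k"
  by (cases "k = 0") (auto simp: mono_deg_def)

lemma lookup_le_mono_deg: "lookup m w \<le> mono_deg m"
  by (cases "w \<in> keys m") (auto simp: mono_deg_def in_keys_iff intro: member_le_sum)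

lemma mono_deg_summands_le: "fst p + snd p = m \<Longrightarrow> mono_deg (fst p) \<le> mono_deg m \<and> mono_deg (snd p) \<le> mono_deg m"
  using mono_deg_add[of "fst p" "snd p"] by auto

lemma finite_mono_deg_le: "finite K \<Longrightarrow> finite {m::mono. keys m \<subseteq> K \<and> mono_deg m \<le> D}"
  using finite_keys_subset_lookup_le[of K "\<lambda>_. D"]
  by (rule finite_subset[rotated]) (auto intro: order_trans[OF lookup_le_mono_deg])

lemma mps_sum_eq_sum:
  assumes "finite S" "S \<subseteq> I" "\<And>i. i \<in> I \<Longrightarrow> i \<notin> S \<Longrightarrow> F i m = 0"
  shows "mps_sum F I m = (\<Sum>i\<in>S. F i m)"
  unfolding mps_sum_def using assms by (intro sum.mono_neutral_left) auto

lemma mps_sum_cong: "(\<And>i. i \<in> I \<Longrightarrow> F i = F' i) \<Longrightarrow> mps_sum F I = mps_sum F' I"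
  unfolding mps_sum_def by (rule ext, rule sum.cong) auto

lemma mps_sum_mono_neutral:
  "J \<subseteq> I \<Longrightarrow> (\<And>i. i \<in> I \<Longrightarrow> i \<notin> J \<Longrightarrow> F i = mps_const 0) \<Longrightarrow> mps_sum F I = mps_sum F J"
  unfolding mps_sum_def mps_const_def by (rule ext, rule sum.cong) (auto, metis)

lemma mps_sum_eq_single:
  assumes "i0 \<in> I" "\<And>i. i \<in> I \<Longrightarrow> i \<noteq> i0 \<Longrightarrow> F i = mps_const 0"
  shows "mps_sum F I = F i0"
proof
  fix m
  have "mps_sum F I m = (\<Sum>i\<in>{i0}. F i m)"
    using assms by (intro mps_sum_eq_sum) (auto simp: mps_const_def)
  then show "mps_sum F I m = F i0 m" by simp
qed

lemma mps_sum_singleton [simp]: "mps_sum F {i} = F i"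
  by (rule mps_sum_eq_single) auto

lemma mps_sum_reindex:
  assumes "bij_betw h J I"
  shows "mps_sum F I = mps_sum (\<lambda>j. F (h j)) J"
proof
  fix m
  let ?S = "{j\<in>J. F (h j) m \<noteq> 0}"
  have inj: "inj_on h ?S" using assms unfolding bij_betw_def by (auto intro: inj_on_subset)
  have img: "h ` ?S = {i\<in>I. F i m \<noteq> 0}" using assms unfolding bij_betw_def by force
  show "mps_sum F I m = mps_sum (\<lambda>j. F (h j)) J m"
    unfolding mps_sum_def using sum.reindex[OF inj, of "\<lambda>i. F i m"] img by simp
qed

text \<open>\<open>d i\<close> is a lower bound for the total degree of the monomials of \<open>F i\<close>; since only
  finitely many \<open>d i\<close> lie below any bound, each coefficient of \<open>mps_sum F I\<close> is a finite sum.\<close>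
definition locally_finite :: "('i \<Rightarrow> mps) \<Rightarrow> 'i set \<Rightarrow> ('i \<Rightarrow> nat) \<Rightarrow> bool" where
  "locally_finite F I d \<longleftrightarrow>
     (\<forall>i\<in>I. \<forall>m. F i m \<noteq> 0 \<longrightarrow> d i \<le> mono_deg m) \<and> (\<forall>D. finite {i\<in>I. d i \<le> D})"

lemma mps_sum_eq_sum_order_le:
  assumes "locally_finite F I d" "mono_deg m \<le> D"
  shows "mps_sum F I m = (\<Sum>i\<in>{i\<in>I. d i \<le> D}. F i m)"
  using assms unfolding locally_finite_def by (intro mps_sum_eq_sum) force+

lemma locally_finite_mult_left:
  assumes "locally_finite F I d"
  shows "locally_finite (\<lambda>i. mps_mult f (F i)) I d"
  unfolding locally_finite_def
proof (intro conjI ballI allI impI)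
  fix i m assume i: "i \<in> I" and "mps_mult f (F i) m \<noteq> 0"
  then obtain a b where "a + b = m" "F i b \<noteq> 0" by (elim mps_mult_nonzeroE)
  then show "d i \<le> mono_deg m"
    using assms i mono_deg_add[of a b] unfolding locally_finite_def by fastforce
qed (use assms in \<open>simp add: locally_finite_def\<close>)

lemma mps_mult_sum_right:
  assumes "locally_finite F I d"
  shows "mps_mult f (mps_sum F I) = mps_sum (\<lambda>i. mps_mult f (F i)) I"
proof
  fix m
  let ?J = "{i\<in>I. d i \<le> mono_deg m}"
  let ?P = "{p::mono\<times>mono. fst p + snd p = m}"
  have "mps_mult f (mps_sum F I) m = (\<Sum>p\<in>?P. f (fst p) * (\<Sum>i\<in>?J. F i (snd p)))"
    unfolding mps_mult_def
  proof (rule sum.cong)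
    fix p assume "p \<in> ?P"
    then have "mono_deg (snd p) \<le> mono_deg m" using mono_deg_summands_le by auto
    then show "f (fst p) * mps_sum F I (snd p) = f (fst p) * (\<Sum>i\<in>?J. F i (snd p))"
      using mps_sum_eq_sum_order_le[OF assms] by simp
  qed simp
  also have "\<dots> = (\<Sum>i\<in>?J. \<Sum>p\<in>?P. f (fst p) * F i (snd p))"
    by (simp add: sum_distrib_left sum.swap[of _ ?P])
  also have "\<dots> = mps_sum (\<lambda>i. mps_mult f (F i)) I m"
    using mps_sum_eq_sum_order_le[OF locally_finite_mult_left[OF assms, of f], of m "mono_deg m"] by (simp add: mps_mult_def)
  finally show "mps_mult f (mps_sum F I) m = mps_sum (\<lambda>i. mps_mult f (F i)) I m" .
qed

lemma locally_finite_fibre: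
  assumes "locally_finite (\<lambda>(i,j). G i j) (Sigma I J) d" "i \<in> I"
  shows "locally_finite (G i) (J i) (\<lambda>j. d (i,j))"
  unfolding locally_finite_def
proof (intro conjI ballI allI impI)
  fix j m assume "j \<in> J i" "G i j m \<noteq> 0"
  then show "d (i,j) \<le> mono_deg m" using assms unfolding locally_finite_def by fastforce
next
  fix D
  have "{j\<in>J i. d (i,j) \<le> D} \<subseteq> snd ` {x\<in>Sigma I J. d x \<le> D}" using assms(2) by force
  then show "finite {j\<in>J i. d (i,j) \<le> D}" using assms(1) unfolding locally_finite_def by (meson finite_imageI finite_subset)
qed

lemma mps_sum_Sigma:
  assumes lf: "locally_finite (\<lambda>(i,j). G i j) (Sigma I J) d"
  shows "mps_sum (\<lambda>i. mps_sum (G i) (J i)) I = mps_sum (\<lambda>(i,j). G i j) (Sigma I J)"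
proof
  fix m
  let ?T = "{x\<in>Sigma I J. d x \<le> mono_deg m}"
  let ?S = "fst ` ?T"
  have fT: "finite ?T" using lf unfolding locally_finite_def by blast
  have inner: "mps_sum (G i) (J i) m = (\<Sum>j\<in>{j\<in>J i. d (i,j) \<le> mono_deg m}. G i j m)" if "i \<in> I" for i
    using mps_sum_eq_sum_order_le[OF locally_finite_fibre[OF lf that], of m "mono_deg m"] by simp
  have "mps_sum (\<lambda>i. mps_sum (G i) (J i)) I m = (\<Sum>i\<in>?S. mps_sum (G i) (J i) m)"
  proof (rule mps_sum_eq_sum)
    fix i assume "i \<in> I" "i \<notin> ?S"
    then have e: "{j\<in>J i. d (i,j) \<le> mono_deg m} = {}" by force
    have "(\<Sum>j\<in>{j\<in>J i. d (i,j) \<le> mono_deg m}. G i j m) = 0" by (simp only: e sum.empty)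
    then show "mps_sum (G i) (J i) m = 0" using inner[OF \<open>i \<in> I\<close>] by simp
  qed (use fT in auto)
  also have "\<dots> = (\<Sum>i\<in>?S. \<Sum>j\<in>{j\<in>J i. d (i,j) \<le> mono_deg m}. G i j m)"
    by (rule sum.cong) (auto simp: inner)
  also have "\<dots> = (\<Sum>(i,j)\<in>Sigma ?S (\<lambda>i. {j\<in>J i. d (i,j) \<le> mono_deg m}). G i j m)"
    by (rule sum.Sigma) (use fT locally_finite_fibre[OF lf] in \<open>auto simp: locally_finite_def\<close>)
  also have "Sigma ?S (\<lambda>i. {j\<in>J i. d (i,j) \<le> mono_deg m}) = ?T" by force
  also have "(\<Sum>(i,j)\<in>?T. G i j m) = mps_sum (\<lambda>(i,j). G i j) (Sigma I J) m"
    using mps_sum_eq_sum_order_le[OF lf, of m "mono_deg m"] by (simp add: case_prod_beta)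
  finally show "mps_sum (\<lambda>i. mps_sum (G i) (J i)) I m = mps_sum (\<lambda>(i,j). G i j) (Sigma I J) m" .
qed

lemma locally_finite_product:
  assumes "locally_finite F I d" "locally_finite F' I' d'"
  shows "locally_finite (\<lambda>(i,i'). mps_mult (F i) (F' i')) (I \<times> I') (\<lambda>(i,i'). d i + d' i')"
  unfolding locally_finite_def
proof (intro conjI ballI allI impI)
  fix x m assume x: "x \<in> I \<times> I'" and nz: "(case x of (i,i') \<Rightarrow> mps_mult (F i) (F' i')) m \<noteq> 0"
  obtain i i' where xi: "x = (i,i')" by force
  from nz xi obtain a b where ab: "a + b = m" "F i a \<noteq> 0" "F' i' b \<noteq> 0" by (auto elim: mps_mult_nonzeroE)
  have "d i \<le> mono_deg a" "d' i' \<le> mono_deg b" using ab x xi assms unfolding locally_finite_def by auto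
  then show "(case x of (i,i') \<Rightarrow> d i + d' i') \<le> mono_deg m" using mono_deg_add[of a b] ab xi by simp
next
  fix D
  have "{x\<in>I \<times> I'. (case x of (i,i') \<Rightarrow> d i + d' i') \<le> D} \<subseteq> {i\<in>I. d i \<le> D} \<times> {i\<in>I'. d' i \<le> D}" by auto
  then show "finite {x\<in>I \<times> I'. (case x of (i,i') \<Rightarrow> d i + d' i') \<le> D}"
    using assms unfolding locally_finite_def by (meson finite_SigmaI finite_subset)
qed

lemma mps_mult_sums:
  assumes lf: "locally_finite F I d" and lf': "locally_finite F' I' d'"
  shows "mps_mult (mps_sum F I) (mps_sum F' I') = mps_sum (\<lambda>(i,i'). mps_mult (F i) (F' i')) (I \<times> I')"
proof
  fix m
  let ?J = "{i\<in>I. d i \<le> mono_deg m}" and ?J' = "{i\<in>I'. d' i \<le> mono_deg m}"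
  let ?P = "{p::mono\<times>mono. fst p + snd p = m}"
  have fJ: "finite ?J" "finite ?J'" using lf lf' unfolding locally_finite_def by auto
  have "mps_mult (mps_sum F I) (mps_sum F' I') m = (\<Sum>p\<in>?P. (\<Sum>i\<in>?J. F i (fst p)) * (\<Sum>i\<in>?J'. F' i (snd p)))"
    unfolding mps_mult_def
  proof (rule sum.cong)
    fix p assume "p \<in> ?P"
    then have "mono_deg (fst p) \<le> mono_deg m" "mono_deg (snd p) \<le> mono_deg m" using mono_deg_summands_le by auto
    then show "mps_sum F I (fst p) * mps_sum F' I' (snd p) = (\<Sum>i\<in>?J. F i (fst p)) * (\<Sum>i\<in>?J'. F' i (snd p))"
      using mps_sum_eq_sum_order_le[OF lf] mps_sum_eq_sum_order_le[OF lf'] by simp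
  qed simp
  also have "\<dots> = (\<Sum>i\<in>?J. \<Sum>i'\<in>?J'. \<Sum>p\<in>?P. F i (fst p) * F' i' (snd p))"
    by (simp add: sum_product sum.swap[of _ ?P])
  also have "\<dots> = (\<Sum>i\<in>?J. \<Sum>i'\<in>?J'. mps_mult (F i) (F' i') m)"
    by (simp add: mps_mult_def)
  also have "\<dots> = (\<Sum>(i,i')\<in>?J \<times> ?J'. mps_mult (F i) (F' i') m)"
    by (rule sum.cartesian_product)
  also have "\<dots> = (\<Sum>x\<in>?J \<times> ?J'. (\<lambda>(i,i'). mps_mult (F i) (F' i')) x m)"
    by (rule sum.cong) auto
  also have "\<dots> = mps_sum (\<lambda>(i,i'). mps_mult (F i) (F' i')) (I \<times> I') m"
  proof (rule mps_sum_eq_sum[symmetric])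
    fix x assume x: "x \<in> I \<times> I'" "x \<notin> ?J \<times> ?J'"
    show "(case x of (i,i') \<Rightarrow> mps_mult (F i) (F' i')) m = 0"
    proof (rule ccontr)
      assume "(case x of (i,i') \<Rightarrow> mps_mult (F i) (F' i')) m \<noteq> 0"
      then have "(case x of (i,i') \<Rightarrow> d i + d' i') \<le> mono_deg m" using locally_finite_product[OF lf lf'] x(1) unfolding locally_finite_def by blast
      then show False using x by auto
    qed
  qed (use fJ in \<open>auto simp: case_prod_beta\<close>)
  finally show "mps_mult (mps_sum F I) (mps_sum F' I') m = mps_sum (\<lambda>(i,i'). mps_mult (F i) (F' i')) (I \<times> I') m" .
qed


section \<open>Exponential monomials\<close>

lemma sum_add_decompositions_prod:
  fixes m :: "'a \<Rightarrow>\<^sub>0 nat" and f g :: "'a \<Rightarrow> nat \<Rightarrow> 'b::comm_semiring_1"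
  assumes fK: "finite K" and mK: "keys m \<subseteq> K"
  shows "(\<Sum>p\<in>{p. fst p + snd p = m}. \<Prod>w\<in>K. f w (lookup (fst p) w) * g w (lookup (snd p) w))
       = (\<Prod>w\<in>K. \<Sum>i\<le>lookup m w. f w i * g w (lookup m w - i))"
proof -
  let ?P = "{p. fst p + snd p = m}"
  define A where "A h = Abs_poly_mapping (\<lambda>w. if w \<in> K then h w else (0::nat))" for h :: "'a \<Rightarrow> nat"
  have lookup_A: "lookup (A h) = (\<lambda>w. if w \<in> K then h w else 0)" for h
    unfolding A_def by (rule lookup_Abs_poly_mapping) (rule finite_subset[OF _ fK], auto)
  have lookup_m: "w \<notin> K \<Longrightarrow> lookup m w = 0" for w
    using mK by (auto simp: in_keys_iff)
  have keys_fst: "keys (fst p) \<subseteq> K" if "p \<in> ?P" for p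
    using that mK by (auto simp: in_keys_iff Poly_Mapping.lookup_add)
  have "(\<Sum>p\<in>?P. \<Prod>w\<in>K. f w (lookup (fst p) w) * g w (lookup (snd p) w))
      = (\<Sum>h\<in>PiE K (\<lambda>w. {..lookup m w}). \<Prod>w\<in>K. f w (h w) * g w (lookup m w - h w))"
  proof (rule sum.reindex_bij_witness[of _ "\<lambda>h. (A h, m - A h)" "\<lambda>p. restrict (lookup (fst p)) K"])
    fix h assume h: "h \<in> PiE K (\<lambda>w. {..lookup m w})"
    show "restrict (lookup (fst (A h, m - A h))) K = h"
      using h by (auto simp: lookup_A restrict_def PiE_def extensional_def fun_eq_iff)
    have "h w \<le> lookup m w" if "w \<in> K" for w using h that by auto
    then have "A h + (m - A h) = m"
      by (intro poly_mapping_eqI) (auto simp: Poly_Mapping.lookup_add lookup_minus lookup_A lookup_m)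
    then show "(A h, m - A h) \<in> ?P" by simp
  next
    fix p assume p: "p \<in> ?P"
    have "A (restrict (lookup (fst p)) K) = fst p"
      by (rule poly_mapping_eqI) (use keys_fst[OF p] in \<open>auto simp: lookup_A in_keys_iff\<close>)
    moreover have "m - fst p = snd p" using p by auto
    ultimately show "(A (restrict (lookup (fst p)) K), m - A (restrict (lookup (fst p)) K)) = p"
      by (simp add: prod_eq_iff)
    show "restrict (lookup (fst p)) K \<in> PiE K (\<lambda>w. {..lookup m w})"
      using p by (auto simp: Poly_Mapping.lookup_add)
    show "(\<Prod>w\<in>K. f w (restrict (lookup (fst p)) K w) * g w (lookup m w - restrict (lookup (fst p)) K w)) =
          (\<Prod>w\<in>K. f w (lookup (fst p) w) * g w (lookup (snd p) w))"
      by (rule prod.cong) (use p in \<open>auto simp: Poly_Mapping.lookup_add\<close>)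
  qed
  also have "\<dots> = (\<Prod>w\<in>K. \<Sum>i\<le>lookup m w. f w i * g w (lookup m w - i))"
    by (subst prod_sum_PiE) (simp_all add: fK)
  finally show ?thesis .
qed

text \<open>\<open>qexp N \<lambda>\<close> is the series \<open>q^N exp (\<Sum>\<^sub>w \<lambda>\<^sub>w w)\<close>; the value of \<open>\<lambda>\<close> at \<open>Q\<close> is ignored.
  It is the product over all variables of the one-variable series \<open>qexp_factor N \<lambda> w\<close>,
  so products of exponential monomials are computed variable by variable.\<close>
definition qexp_factor :: "nat \<Rightarrow> (var \<Rightarrow> rat) \<Rightarrow> var \<Rightarrow> nat \<Rightarrow> rat" where
  "qexp_factor N la w k = (if w = Q then (if k = N then 1 else 0) else la w ^ k / fact k)"

definition qexp :: "nat \<Rightarrow> (var \<Rightarrow> rat) \<Rightarrow> mps" where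
  "qexp N la m = (\<Prod>w\<in>insert Q (keys m). qexp_factor N la w (lookup m w))"

lemma qexp_eq_prod:
  assumes "finite K" "insert Q (keys m) \<subseteq> K"
  shows "qexp N la m = (\<Prod>w\<in>K. qexp_factor N la w (lookup m w))"
  unfolding qexp_def using assms
  by (intro prod.mono_neutral_left) (auto simp: qexp_factor_def in_keys_iff)

lemma qexp_apply:
  "qexp N la m = (if lookup m Q = N then (\<Prod>w\<in>keys m - {Q}. la w ^ lookup m w / fact (lookup m w)) else 0)"
proof -
  have "qexp N la m = qexp_factor N la Q (lookup m Q) * (\<Prod>w\<in>keys m - {Q}. qexp_factor N la w (lookup m w))"
    unfolding qexp_def by (subst insert_Diff_single[symmetric], subst prod.insert) auto
  also have "(\<Prod>w\<in>keys m - {Q}. qexp_factor N la w (lookup m w))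
           = (\<Prod>w\<in>keys m - {Q}. la w ^ lookup m w / fact (lookup m w))"
    by (rule prod.cong) (auto simp: qexp_factor_def)
  finally show ?thesis by (simp add: qexp_factor_def)
qed

lemma qexp_nonzero_lookup_Q: "qexp N la m \<noteq> 0 \<Longrightarrow> lookup m Q = N"
  by (simp add: qexp_apply split: if_splits)

lemma qexp_nonzero_keys: "qexp N la m \<noteq> 0 \<Longrightarrow> w \<in> keys m \<Longrightarrow> w \<noteq> Q \<Longrightarrow> la w \<noteq> 0"
  by (auto simp: qexp_apply in_keys_iff split: if_splits)

lemma qexp_zero_coeffs: "qexp N (\<lambda>_. 0) m = (if m = Poly_Mapping.single Q N then 1 else 0)"
proof (cases "keys m \<subseteq> {Q}")
  case True
  then have "m = Poly_Mapping.single Q (lookup m Q)"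
    by (intro poly_mapping_eqI) (auto simp: lookup_single in_keys_iff when_def)
  moreover from True have "keys m - {Q} = {}" by auto
  ultimately show ?thesis
    by (auto simp: qexp_apply)
next
  case False
  then obtain w where "w \<in> keys m" "w \<noteq> Q" by blast
  then show ?thesis
    by (auto simp: qexp_apply in_keys_iff intro!: prod_zero bexI[of _ w])
qed

lemma mps_const_1_qexp: "mps_const 1 = qexp 0 (\<lambda>_. 0)"
  by (simp add: fun_eq_iff mps_const_def qexp_zero_coeffs)

lemma mps_var_Q_qexp: "mps_var Q = qexp 1 (\<lambda>_. 0)"
  by (simp add: fun_eq_iff mps_var_def qexp_zero_coeffs)

lemma sum_qexp_factor_convolution:
  "(\<Sum>i\<le>k. qexp_factor N la w i * qexp_factor N' mu w (k - i)) = qexp_factor (N + N') (\<lambda>w. la w + mu w) w k"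
proof (cases "w = Q")
  case True
  have "(\<Sum>i\<le>k. qexp_factor N la w i * qexp_factor N' mu w (k - i))
      = (\<Sum>i\<le>k. if i = N then (if k - N = N' then 1 else 0) else (0::rat))"
    unfolding qexp_factor_def using True by (intro sum.cong) auto
  then show ?thesis using True by (auto simp: qexp_factor_def)
next
  case False
  have "(\<Sum>i\<le>k. qexp_factor N la w i * qexp_factor N' mu w (k - i))
      = (\<Sum>i\<le>k. of_nat (k choose i) * la w ^ i * mu w ^ (k - i)) / fact k"
    unfolding qexp_factor_def using False by (simp add: sum_divide_distrib binomial_fact field_simps)
  also have "\<dots> = (la w + mu w) ^ k / fact k" by (simp add: binomial_ring)
  finally show ?thesis using False by (simp add: qexp_factor_def)
qed

lemma qexp_mult: "mps_mult (qexp N la) (qexp N' mu) = qexp (N + N') (\<lambda>w. la w + mu w)"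
proof
  fix m :: mono
  let ?K = "insert Q (keys m)"
  have "mps_mult (qexp N la) (qexp N' mu) m
      = (\<Sum>p\<in>{p. fst p + snd p = m}. \<Prod>w\<in>?K. qexp_factor N la w (lookup (fst p) w) * qexp_factor N' mu w (lookup (snd p) w))"
    unfolding mps_mult_def
  proof (rule sum.cong[OF refl])
    fix p :: "mono \<times> mono" assume "p \<in> {p. fst p + snd p = m}"
    then have "insert Q (keys (fst p)) \<subseteq> ?K" "insert Q (keys (snd p)) \<subseteq> ?K"
      by (auto simp: in_keys_iff Poly_Mapping.lookup_add)
    then show "qexp N la (fst p) * qexp N' mu (snd p)
        = (\<Prod>w\<in>?K. qexp_factor N la w (lookup (fst p) w) * qexp_factor N' mu w (lookup (snd p) w))"
      by (simp add: qexp_eq_prod[of ?K] prod.distrib)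
  qed
  also have "\<dots> = (\<Prod>w\<in>?K. qexp_factor (N + N') (\<lambda>w. la w + mu w) w (lookup m w))"
    by (subst sum_add_decompositions_prod) (auto simp: sum_qexp_factor_convolution)
  also have "\<dots> = qexp (N + N') (\<lambda>w. la w + mu w) m"
    by (simp add: qexp_def)
  finally show "mps_mult (qexp N la) (qexp N' mu) m = qexp (N + N') (\<lambda>w. la w + mu w) m" .
qed

lemma mps_power_qexp: "mps_power (qexp N la) k = qexp (k * N) (\<lambda>w. of_nat k * la w)"
  by (induction k) (simp_all add: mps_power_def mps_const_1_qexp qexp_mult algebra_simps)

lemma qexp_minus_single:
  assumes w: "w \<in> keys m" "w \<noteq> Q"
  shows "la w * qexp N la (m - Poly_Mapping.single w 1) = of_nat (lookup m w) * qexp N la m"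
proof -
  define m' where "m' = m - Poly_Mapping.single w 1"
  let ?K = "insert Q (keys m)" and ?F = "qexp_factor N la"
  obtain n where n: "lookup m w = Suc n" using w by (cases "lookup m w") (auto simp: in_keys_iff)
  have lookup_m': "lookup m' x = (if x = w then n else lookup m x)" for x
    using n by (simp add: m'_def lookup_minus lookup_single)
  have "keys m' \<subseteq> keys m" using n by (auto simp: in_keys_iff lookup_m' split: if_splits)
  then have "qexp N la m' = (\<Prod>x\<in>?K. ?F x (lookup m' x))"
    by (intro qexp_eq_prod) auto
  also have "\<dots> = ?F w (lookup m' w) * (\<Prod>x\<in>?K - {w}. ?F x (lookup m' x))"
    using w by (intro prod.remove) auto
  also have "\<dots> = ?F w n * (\<Prod>x\<in>?K - {w}. ?F x (lookup m x))"
    by (simp add: lookup_m')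
  finally have "qexp N la m' = ?F w n * (\<Prod>x\<in>?K - {w}. ?F x (lookup m x))" .
  moreover have "qexp N la m = ?F w (Suc n) * (\<Prod>x\<in>?K - {w}. ?F x (lookup m x))"
    using w n by (simp add: qexp_def insert_absorb prod.remove[of ?K w])
  moreover have "la w * ?F w n = of_nat (Suc n) * ?F w (Suc n)"
    using w by (simp add: qexp_factor_def field_simps del: of_nat_Suc)
  ultimately show ?thesis by (simp add: m'_def n mult.assoc[symmetric])
qed

text \<open>\<open>linform \<lambda> = \<Sum>\<^sub>w\<^sub>\<noteq>\<^sub>Q \<lambda>\<^sub>w w\<close>.\<close>
definition linform :: "(var \<Rightarrow> rat) \<Rightarrow> mps" where
  "linform la m = (if lookup m Q = 0 \<and> mono_deg m = 1 then (\<Sum>w\<in>keys m. la w) else 0)"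

lemma mono_deg_eq_1_single:
  assumes "mono_deg m = 1"
  obtains w where "m = Poly_Mapping.single w 1"
proof -
  have "keys m \<noteq> {}" using assms by (auto simp: mono_deg_def)
  then obtain w where w: "w \<in> keys m" by blast
  have "mono_deg m = lookup m w + (\<Sum>x\<in>keys m - {w}. lookup m x)"
    unfolding mono_deg_def using w by (simp add: sum.remove)
  moreover have "lookup m w \<ge> 1" using w by (simp add: in_keys_iff)
  ultimately have 1: "lookup m w = 1" and "(\<Sum>x\<in>keys m - {w}. lookup m x) = 0"
    using assms by linarith+
  then have "\<forall>x\<in>keys m - {w}. lookup m x = 0" by simp
  then have "m = Poly_Mapping.single w 1"
    by (intro poly_mapping_eqI) (auto simp: lookup_single when_def 1 in_keys_iff)
  then show ?thesis by (rule that)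
qed

lemma linform_single: "w \<noteq> Q \<Longrightarrow> linform la (Poly_Mapping.single w 1) = la w"
  by (simp add: linform_def mono_deg_single lookup_single)

lemma linform_nonzero_single:
  assumes "linform la a \<noteq> 0"
  obtains w where "w \<noteq> Q" "a = Poly_Mapping.single w 1"
proof -
  have a: "lookup a Q = 0" "mono_deg a = 1" using assms by (auto simp: linform_def split: if_splits)
  obtain w where w: "a = Poly_Mapping.single w 1" using mono_deg_eq_1_single[OF a(2)] .
  then have "w \<noteq> Q" using a(1) by (auto simp: lookup_single)
  then show ?thesis using w that by blast
qed

lemma mps_mult_linform_apply:
  "mps_mult (linform la) f m = (\<Sum>w\<in>keys m - {Q}. la w * f (m - Poly_Mapping.single w 1))"
proof -
  let ?P = "{p::mono\<times>mono. fst p + snd p = m}" and ?W = "keys m - {Q}"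
  let ?e = "\<lambda>w. Poly_Mapping.single w (1::nat)"
  let ?j = "\<lambda>w. (?e w, m - ?e w)"
  have j_mem: "?j w \<in> ?P" if "w \<in> ?W" for w
    using that by (auto intro!: poly_mapping_eqI
        simp: Poly_Mapping.lookup_add lookup_minus lookup_single when_def in_keys_iff)
  have "mps_mult (linform la) f m = (\<Sum>p\<in>?j ` ?W. linform la (fst p) * f (snd p))"
    unfolding mps_mult_def
  proof (rule sum.mono_neutral_right[OF finite_add_decompositions]; (intro ballI)?)
    show "?j ` ?W \<subseteq> ?P" using j_mem by auto
    fix p assume p: "p \<in> ?P - ?j ` ?W"
    show "linform la (fst p) * f (snd p) = 0"
    proof (rule ccontr)
      assume "linform la (fst p) * f (snd p) \<noteq> 0"
      then obtain w where w: "w \<noteq> Q" "fst p = ?e w" by (auto elim: linform_nonzero_single)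
      with p have "w \<in> ?W" "snd p = m - ?e w"
        by (auto simp: in_keys_iff Poly_Mapping.lookup_add)
      then show False using p w by (auto simp: prod_eq_iff)
    qed
  qed
  also have "\<dots> = (\<Sum>w\<in>?W. la w * f (m - ?e w))"
    by (subst sum.reindex)
      (auto simp: inj_on_def poly_mapping_eq_iff fun_eq_iff lookup_single when_def linform_single[simplified])
  finally show ?thesis .
qed

text \<open>The coefficients of \<open>(\<Sum>\<^sub>w \<lambda>\<^sub>w w)\<^sup>k\<close>, by the multinomial theorem.\<close>
definition linpow :: "nat \<Rightarrow> (var \<Rightarrow> rat) \<Rightarrow> mps" where
  "linpow k la m = (if mono_deg m = k then fact k * qexp 0 la m else 0)"

lemma linform_mult_linpow: "mps_mult (linform la) (linpow k la) = linpow (Suc k) la"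
proof
  fix m :: mono
  let ?e = "\<lambda>w. Poly_Mapping.single w (Suc 0)"
  have deg_minus: "mono_deg (m - ?e w) = mono_deg m - 1" if "w \<in> keys m" for w
  proof -
    have "m = (m - ?e w) + ?e w"
      using that by (intro poly_mapping_eqI)
        (auto simp: Poly_Mapping.lookup_add lookup_minus lookup_single when_def in_keys_iff)
    then show ?thesis using mono_deg_add[of "m - ?e w" "?e w"] by (simp add: mono_deg_single)
  qed
  show "mps_mult (linform la) (linpow k la) m = linpow (Suc k) la m"
  proof (cases "mono_deg m = Suc k")
    case False
    have "linpow k la (m - ?e w) = 0" if "w \<in> keys m" for w
      using False deg_minus[OF that] lookup_le_mono_deg[of m w] that
      by (auto simp: linpow_def in_keys_iff)
    then show ?thesis using False by (simp add: mps_mult_linform_apply linpow_def)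
  next
    case deg: True
    have "mps_mult (linform la) (linpow k la) m = fact k * (\<Sum>w\<in>keys m - {Q}. la w * qexp 0 la (m - ?e w))"
      by (simp add: mps_mult_linform_apply linpow_def deg_minus deg sum_distrib_left mult_ac)
    also have "\<dots> = fact k * (\<Sum>w\<in>keys m - {Q}. of_nat (lookup m w) * qexp 0 la m)"
      by (simp add: qexp_minus_single[simplified])
    also have "\<dots> = fact k * (of_nat (mono_deg m) * qexp 0 la m)"
    proof (cases "Q \<in> keys m")
      case True then show ?thesis by (simp add: qexp_apply in_keys_iff)
    next
      case False then show ?thesis by (simp add: mono_deg_def sum_distrib_right)
    qed
    also have "\<dots> = linpow (Suc k) la m" by (simp add: linpow_def deg)
    finally show ?thesis .
  qed
qed

lemma mps_power_linform: "mps_power (linform la) k = linpow k la"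
proof (induction k)
  case 0
  have "mono_deg m \<noteq> 0" if "m \<noteq> 0" for m
  proof -
    from that obtain w where "w \<in> keys m" by (metis all_not_in_conv keys_eq_empty)
    then show ?thesis using lookup_le_mono_deg[of m w] by (auto simp: in_keys_iff)
  qed
  then show ?case
    by (auto simp: mps_power_def mps_const_def linpow_def qexp_apply fun_eq_iff mono_deg_def)
next
  case (Suc k) then show ?case by (simp add: mps_power_def linform_mult_linpow)
qed

lemma mps_smult_linform: "mps_smult c (linform la) = linform (\<lambda>w. c * la w)"
  by (auto simp: mps_smult_def linform_def fun_eq_iff sum_distrib_left)

lemma mps_exp_linform: "mps_exp (linform la) = qexp 0 la"
proof
  fix m :: mono
  have "mps_exp (linform la) m = (\<Sum>k\<in>{mono_deg m}. mps_smult (1 / fact k) (mps_power (linform la) k) m)"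
    unfolding mps_exp_def
    by (rule mps_sum_eq_sum) (auto simp: mps_power_linform linpow_def mps_smult_def)
  then show "mps_exp (linform la) m = qexp 0 la m"
    by (simp add: mps_power_linform linpow_def mps_smult_def)
qed

lemma En_linform: "En n (linform la) = qexp 0 (\<lambda>w. of_nat n * la w)"
  by (simp add: En_def mps_smult_linform mps_exp_linform)

lemma locally_finite_qexp:
  assumes "\<And>i. i \<in> I \<Longrightarrow> F i = qexp (n i) (la i)" and "\<And>D. finite {i\<in>I. n i \<le> D}"
  shows "locally_finite F I n"
  unfolding locally_finite_def using assms qexp_nonzero_lookup_Q lookup_le_mono_deg by metis

lemma finite_mult_le: "0 < (n::nat) \<Longrightarrow> finite {k. k * n \<le> D}"
proof (rule finite_subset[of _ "{..D}"])
  assume "0 < n"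
  then show "{k. k * n \<le> D} \<subseteq> {..D}"
    using dual_order.trans[OF _ mult_le_mono2[of 1 n]] by fastforce
qed simp

lemma Ln_linform:
  assumes "0 < n"
  shows "Ln n (linform la) = mps_sum (\<lambda>k. qexp (k * n) (\<lambda>w. of_nat k * la w)) {0<..}"
proof -
  have W: "mps_mult (mps_exp (linform la)) (mps_power (mps_var Q) n) = qexp n la"
    unfolding mps_exp_linform mps_var_Q_qexp mps_power_qexp qexp_mult by simp
  have "mps_sub (mps_const 1) (mps_sub (mps_const 1) (qexp n la)) = qexp n la"
    by (simp add: mps_sub_def fun_eq_iff)
  then have inv: "mps_inverse (mps_sub (mps_const 1) (qexp n la))
      = mps_sum (\<lambda>k. qexp (k * n) (\<lambda>w. of_nat k * la w)) UNIV"
    unfolding mps_inverse_def by (simp add: mps_power_qexp[abs_def])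
  have lf: "locally_finite (\<lambda>k. qexp (k * n) (\<lambda>w. of_nat k * la w)) UNIV (\<lambda>k. k * n)"
    by (rule locally_finite_qexp) (simp_all add: finite_mult_le assms)
  have "Ln n (linform la) = mps_mult (qexp n la) (mps_inverse (mps_sub (mps_const 1) (qexp n la)))"
    unfolding Ln_def Let_def W ..
  also have "\<dots> = mps_sum (\<lambda>k. mps_mult (qexp n la) (qexp (k * n) (\<lambda>w. of_nat k * la w))) UNIV"
    unfolding inv by (rule mps_mult_sum_right[OF lf])
  also have "\<dots> = mps_sum (\<lambda>k. qexp (Suc k * n) (\<lambda>w. of_nat (Suc k) * la w)) UNIV"
    by (rule mps_sum_cong) (simp add: qexp_mult algebra_simps)
  also have "\<dots> = mps_sum (\<lambda>k. qexp (k * n) (\<lambda>w. of_nat k * la w)) {0<..}"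
    by (rule mps_sum_reindex[symmetric]) (simp add: bij_betw_def greaterThan_0)
  finally show ?thesis .
qed

lemma En_mult_Ln_linform:
  assumes "0 < u"
  shows "mps_mult (En u (linform a)) (Ln u (linform b)) =
    mps_sum (\<lambda>k. qexp (k * u) (\<lambda>w. of_nat u * a w + of_nat k * b w)) {0<..}"
proof -
  have lf: "locally_finite (\<lambda>k. qexp (k * u) (\<lambda>w. of_nat k * b w)) {0<..} (\<lambda>k. k * u)"
    by (rule locally_finite_qexp) (auto intro: finite_subset[OF _ finite_mult_le[OF assms]])
  show ?thesis
    unfolding En_linform Ln_linform[OF assms] mps_mult_sum_right[OF lf]
    by (rule mps_sum_cong) (simp add: qexp_mult)
qed

section \<open>Expansion of the products over decreasing tuples\<close>

definition pos_tuples :: "nat \<Rightarrow> nat list set" where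
  "pos_tuples l = {v. length v = l \<and> (\<forall>x\<in>set v. 0 < x)}"

definition pair_index :: "nat \<Rightarrow> (nat list \<times> nat list) set" where
  "pair_index l = decr_tuples l \<times> pos_tuples l"

definition pair_weight :: "nat list \<Rightarrow> nat list \<Rightarrow> nat" where
  "pair_weight u v = (\<Sum>i<length u. u!i * v!i)"

definition pair_coeffs ::
  "(nat \<Rightarrow> var \<Rightarrow> rat) \<Rightarrow> (nat \<Rightarrow> var \<Rightarrow> rat) \<Rightarrow> nat list \<Rightarrow> nat list \<Rightarrow> var \<Rightarrow> rat" where
  "pair_coeffs A B u v w = (\<Sum>i<length u. of_nat (u!i) * A (Suc i) w + of_nat (v!i) * B (Suc i) w)"

lemma pair_weight_Cons: "pair_weight (x # u) (k # v) = k * x + pair_weight u v"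
  unfolding pair_weight_def by (simp add: sum.lessThan_Suc_shift del: sum.lessThan_Suc)

lemma pair_coeffs_Cons:
  "pair_coeffs A B (x # u) (k # v) =
     (\<lambda>w. (of_nat x * A 1 w + of_nat k * B 1 w) + pair_coeffs (\<lambda>i. A (Suc i)) (\<lambda>i. B (Suc i)) u v w)"
  unfolding pair_coeffs_def by (simp add: sum.lessThan_Suc_shift del: sum.lessThan_Suc)

lemma nth_le_pair_weight:
  assumes "length v = length u" "\<forall>x\<in>set v. 0 < x" "i < length u"
  shows "u!i \<le> pair_weight u v"
proof -
  have "0 < v!i" using assms by simp
  then have "u!i \<le> u!i * v!i" by simp
  also have "\<dots> \<le> pair_weight u v" unfolding pair_weight_def using assms(3) by (intro member_le_sum) auto
  finally show ?thesis .
qed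

lemma pair_weight_commute: "length v = length u \<Longrightarrow> pair_weight u v = pair_weight v u"
  by (simp add: pair_weight_def mult.commute)

lemma set_subset_atMost_pair_weight:
  assumes "length v = length u" "\<forall>x\<in>set v. 0 < x" "pair_weight u v \<le> D"
  shows "set u \<subseteq> {..D}"
  using nth_le_pair_weight[OF assms(1,2)] assms(3) by (fastforce simp: in_set_conv_nth)

lemma locally_finite_pos_tuples:
  assumes "\<forall>x\<in>set u. 0 < x"
  shows "locally_finite (\<lambda>v. qexp (pair_weight u v) (pair_coeffs A B u v)) (pos_tuples (length u)) (pair_weight u)"
proof (rule locally_finite_qexp)
  fix D
  have "set v \<subseteq> {..D}" if "v \<in> pos_tuples (length u)" "pair_weight u v \<le> D" for v
    using that assms pair_weight_commute[of v u]
    by (intro set_subset_atMost_pair_weight[of u v]) (auto simp: pos_tuples_def)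
  then have "{v\<in>pos_tuples (length u). pair_weight u v \<le> D} \<subseteq> {v. set v \<subseteq> {..D} \<and> length v = length u}"
    by (auto simp: pos_tuples_def)
  then show "finite {v\<in>pos_tuples (length u). pair_weight u v \<le> D}"
    by (rule finite_subset) (rule finite_lists_length_eq, simp)
qed simp

lemma locally_finite_pair_index:
  "locally_finite (\<lambda>(u,v). qexp (pair_weight u v) (pair_coeffs A B u v)) (pair_index l) (\<lambda>(u,v). pair_weight u v)"
proof (rule locally_finite_qexp[where la = "\<lambda>(u,v). pair_coeffs A B u v"])
  fix D :: nat
  let ?B = "{xs. set xs \<subseteq> {..D} \<and> length xs = l}"
  have "set u \<subseteq> {..D} \<and> set v \<subseteq> {..D}" if "(u, v) \<in> pair_index l" "pair_weight u v \<le> D" for u v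
    using that pair_weight_commute[of v u]
      set_subset_atMost_pair_weight[of v u D] set_subset_atMost_pair_weight[of u v D]
    by (auto simp: pair_index_def pos_tuples_def decr_tuples_def)
  then have "{x\<in>pair_index l. (case x of (u,v) \<Rightarrow> pair_weight u v) \<le> D} \<subseteq> ?B \<times> ?B"
    by (auto simp: pair_index_def pos_tuples_def decr_tuples_def)
  moreover have "finite (?B \<times> ?B)" by (intro finite_SigmaI finite_lists_length_eq) auto
  ultimately show "finite {x\<in>pair_index l. (case x of (u,v) \<Rightarrow> pair_weight u v) \<le> D}"
    by (rule finite_subset)
qed auto

lemma listprod_En_Ln_linform:
  assumes "\<forall>x\<in>set u. 0 < x"
  shows "mps_listprod (map (\<lambda>i. mps_mult (En (u!i) (linform (A (Suc i)))) (Ln (u!i) (linform (B (Suc i)))))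
                          [0..<length u])
       = mps_sum (\<lambda>v. qexp (pair_weight u v) (pair_coeffs A B u v)) (pos_tuples (length u))"
  using assms
proof (induction u arbitrary: A B)
  case Nil
  have "pos_tuples 0 = {[]}" by (auto simp: pos_tuples_def)
  moreover have "pair_coeffs A B [] [] = (\<lambda>_. 0)" by (simp add: pair_coeffs_def fun_eq_iff)
  ultimately show ?case
    by (simp add: mps_listprod_def mps_const_1_qexp pair_weight_def)
next
  case (Cons x u)
  let ?F = "\<lambda>k. qexp (k * x) (\<lambda>w. of_nat x * A 1 w + of_nat k * B 1 w)"
  let ?G = "\<lambda>v. qexp (pair_weight u v) (pair_coeffs (\<lambda>i. A (Suc i)) (\<lambda>i. B (Suc i)) u v)"
  have lf1: "locally_finite ?F {0<..} (\<lambda>k. k * x)"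
    using Cons.prems by (intro locally_finite_qexp) (auto intro: finite_subset[OF _ finite_mult_le])
  have lf2: "locally_finite ?G (pos_tuples (length u)) (pair_weight u)"
    using Cons.prems locally_finite_pos_tuples[of u "\<lambda>i. A (Suc i)" "\<lambda>i. B (Suc i)"] by simp
  have bij: "bij_betw (\<lambda>v. (hd v, tl v)) (pos_tuples (length (x # u))) ({0<..} \<times> pos_tuples (length u))"
    by (rule bij_betw_byWitness[where f'="\<lambda>(k, v). k # v"])
       (auto simp: pos_tuples_def length_Suc_conv)
  have "mps_listprod (map (\<lambda>i. mps_mult (En ((x # u)!i) (linform (A (Suc i)))) (Ln ((x # u)!i) (linform (B (Suc i)))))
                          [0..<length (x # u)])
      = mps_mult (mps_mult (En x (linform (A 1))) (Ln x (linform (B 1))))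
          (mps_listprod (map (\<lambda>i. mps_mult (En (u!i) (linform (A (Suc (Suc i))))) (Ln (u!i) (linform (B (Suc (Suc i))))))
                          [0..<length u]))"
    by (simp add: mps_listprod_def map_upt_Suc del: upt_Suc)
  also have "\<dots> = mps_mult (mps_sum ?F {0<..}) (mps_sum ?G (pos_tuples (length u)))"
    using Cons.prems Cons.IH[of "\<lambda>i. A (Suc i)" "\<lambda>i. B (Suc i)"] by (simp add: En_mult_Ln_linform)
  also have "\<dots> = mps_sum (\<lambda>(k, v). mps_mult (?F k) (?G v)) ({0<..} \<times> pos_tuples (length u))"
    by (rule mps_mult_sums[OF lf1 lf2])
  also have "\<dots> = mps_sum (\<lambda>v. qexp (pair_weight (x # u) v) (pair_coeffs A B (x # u) v)) (pos_tuples (length (x # u)))"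
    by (subst mps_sum_reindex[OF bij])
       (auto intro!: mps_sum_cong simp: pos_tuples_def length_Suc_conv qexp_mult pair_weight_Cons pair_coeffs_Cons)
  finally show ?case .
qed

lemma mps_sum_En_Ln_linform:
  "mps_sum (\<lambda>u. mps_listprod (map (\<lambda>j. mps_mult (En (u!(j-1)) (linform (A j))) (Ln (u!(j-1)) (linform (B j))))
                                   [1..<l+1]))
           (decr_tuples l)
   = mps_sum (\<lambda>(u,v). qexp (pair_weight u v) (pair_coeffs A B u v)) (pair_index l)"
proof -
  have "mps_listprod (map (\<lambda>j. mps_mult (En (u!(j-1)) (linform (A j))) (Ln (u!(j-1)) (linform (B j)))) [1..<l+1])
      = mps_sum (\<lambda>v. qexp (pair_weight u v) (pair_coeffs A B u v)) (pos_tuples l)"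
    if "u \<in> decr_tuples l" for u
  proof -
    have lu: "length u = l" and pos: "\<forall>x\<in>set u. 0 < x" using that by (auto simp: decr_tuples_def)
    have "[1..<l+1] = map Suc [0..<length u]" by (simp add: lu map_Suc_upt)
    then show ?thesis using listprod_En_Ln_linform[OF pos, of A B] lu by (simp add: comp_def)
  qed
  then have "mps_sum (\<lambda>u. mps_listprod (map (\<lambda>j. mps_mult (En (u!(j-1)) (linform (A j))) (Ln (u!(j-1)) (linform (B j))))
                                   [1..<l+1])) (decr_tuples l)
      = mps_sum (\<lambda>u. mps_sum (\<lambda>v. qexp (pair_weight u v) (pair_coeffs A B u v)) (pos_tuples l)) (decr_tuples l)"
    by (rule mps_sum_cong)
  also have "\<dots> = mps_sum (\<lambda>(u,v). qexp (pair_weight u v) (pair_coeffs A B u v)) (pair_index l)"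
    unfolding pair_index_def
    by (rule mps_sum_Sigma) (rule locally_finite_pair_index[of A B l, unfolded pair_index_def])
  finally show ?thesis .
qed

definition coord :: "var \<Rightarrow> var \<Rightarrow> rat" where
  "coord v w = (if w = v then 1 else 0)"

definition Tvars :: "nat \<Rightarrow> var set" where
  "Tvars l = {X j |j. 1 \<le> j \<and> j \<le> l} \<union> {Y j |j. 1 \<le> j \<and> j \<le> l}"

lemma Tvars_image: "Tvars l = (\<lambda>i. X (Suc i)) ` {..<l} \<union> (\<lambda>i. Y (Suc i)) ` {..<l}"
  unfolding Tvars_def
  by (auto simp: image_iff Bex_def) (metis Suc_pred' Suc_le_eq Suc_less_eq le_imp_less_Suc)+

lemma finite_Tvars: "finite (Tvars l)"
  by (simp add: Tvars_image)

lemma prod_Tvars: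
  assumes "\<And>w. f w 0 = 1" "keys m - {Q} \<subseteq> Tvars l"
  shows "(\<Prod>w\<in>keys m - {Q}. f w (lookup m w))
       = (\<Prod>i<l. f (X (Suc i)) (lookup m (X (Suc i))) * f (Y (Suc i)) (lookup m (Y (Suc i))))"
proof -
  have "(\<Prod>w\<in>keys m - {Q}. f w (lookup m w)) = (\<Prod>w\<in>Tvars l. f w (lookup m w))"
    using assms finite_Tvars by (intro prod.mono_neutral_left) (auto simp: in_keys_iff Tvars_def)
  also have "\<dots> = (\<Prod>w\<in>(\<lambda>i. X (Suc i)) ` {..<l}. f w (lookup m w)) * (\<Prod>w\<in>(\<lambda>i. Y (Suc i)) ` {..<l}. f w (lookup m w))"
    unfolding Tvars_image by (rule prod.union_disjoint) auto
  also have "\<dots> = (\<Prod>i<l. f (X (Suc i)) (lookup m (X (Suc i)))) * (\<Prod>i<l. f (Y (Suc i)) (lookup m (Y (Suc i))))"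
    by (simp add: prod.reindex inj_on_def)
  finally show ?thesis by (simp add: prod.distrib)
qed

lemma pair_coeffs_coord_X:
  "i < length u \<Longrightarrow> pair_coeffs (\<lambda>j. coord (Y j)) (\<lambda>j. coord (X j)) u v (X (Suc i)) = of_nat (v!i)"
  unfolding pair_coeffs_def coord_def by (simp add: if_distrib[of "\<lambda>x. _ * x"] sum.delta' cong: if_cong)

lemma pair_coeffs_coord_Y:
  "i < length u \<Longrightarrow> pair_coeffs (\<lambda>j. coord (Y j)) (\<lambda>j. coord (X j)) u v (Y (Suc i)) = of_nat (u!i)"
  unfolding pair_coeffs_def coord_def by (simp add: if_distrib[of "\<lambda>x. _ * x"] sum.delta' cong: if_cong)

lemma pair_coeffs_coord_other:
  "w \<notin> Tvars (length u) \<Longrightarrow> pair_coeffs (\<lambda>j. coord (Y j)) (\<lambda>j. coord (X j)) u v w = 0"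
  unfolding pair_coeffs_def coord_def Tvars_def by (intro sum.neutral) auto

lemma qexp_pair_coeffs_coord_apply:
  assumes "length u = l" "keys m - {Q} \<subseteq> Tvars l"
  shows "qexp (lookup m Q) (pair_coeffs (\<lambda>j. coord (Y j)) (\<lambda>j. coord (X j)) u v) m
       = (\<Prod>j<l. of_nat (u!j) ^ lookup m (Y (Suc j)) / fact (lookup m (Y (Suc j)))
                  * of_nat (v!j) ^ lookup m (X (Suc j)) / fact (lookup m (X (Suc j))))"
proof -
  let ?C = "pair_coeffs (\<lambda>j. coord (Y j)) (\<lambda>j. coord (X j)) u v"
  have "qexp (lookup m Q) ?C m = (\<Prod>w\<in>keys m - {Q}. ?C w ^ lookup m w / fact (lookup m w))"
    by (simp add: qexp_apply)
  also have "\<dots> = (\<Prod>i<l. ?C (X (Suc i)) ^ lookup m (X (Suc i)) / fact (lookup m (X (Suc i)))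
                          * (?C (Y (Suc i)) ^ lookup m (Y (Suc i)) / fact (lookup m (Y (Suc i)))))"
    by (rule prod_Tvars) (simp_all add: assms)
  also have "\<dots> = (\<Prod>j<l. of_nat (u!j) ^ lookup m (Y (Suc j)) / fact (lookup m (Y (Suc j)))
                  * of_nat (v!j) ^ lookup m (X (Suc j)) / fact (lookup m (X (Suc j))))"
    by (rule prod.cong) (auto simp: assms pair_coeffs_coord_X pair_coeffs_coord_Y mult_ac)
  finally show ?thesis .
qed

lemma mps_sum_pair_index_apply:
  "mps_sum (\<lambda>(u,v). qexp (pair_weight u v) (pair_coeffs A B u v)) (pair_index l) m =
   (\<Sum>(u,v)\<in>{(u,v)\<in>pair_index l. pair_weight u v = lookup m Q}. qexp (pair_weight u v) (pair_coeffs A B u v) m)"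
proof -
  let ?S = "{(u,v)\<in>pair_index l. pair_weight u v = lookup m Q}"
  have "finite {x\<in>pair_index l. (\<lambda>(u,v). pair_weight u v) x \<le> lookup m Q}"
    using locally_finite_pair_index[of A B l] unfolding locally_finite_def by blast
  then have "finite ?S" by (rule finite_subset[rotated]) auto
  then have "mps_sum (\<lambda>(u,v). qexp (pair_weight u v) (pair_coeffs A B u v)) (pair_index l) m
      = (\<Sum>x\<in>?S. (\<lambda>(u,v). qexp (pair_weight u v) (pair_coeffs A B u v)) x m)"
    by (rule mps_sum_eq_sum) (auto dest: qexp_nonzero_lookup_Q)
  then show ?thesis by (simp add: split_beta)
qed

lemma Tgen_eq_pair_sum:
  "Tgen l = mps_sum (\<lambda>(u,v). qexp (pair_weight u v) (pair_coeffs (\<lambda>j. coord (Y j)) (\<lambda>j. coord (X j)) u v))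
                    (pair_index l)"
proof
  fix m :: mono
  let ?C = "\<lambda>u v. pair_coeffs (\<lambda>j. coord (Y j)) (\<lambda>j. coord (X j)) u v"
  let ?S = "{(u,v)\<in>pair_index l. pair_weight u v = lookup m Q}"
  show "Tgen l m = mps_sum (\<lambda>(u,v). qexp (pair_weight u v) (?C u v)) (pair_index l) m"
  proof (cases "keys m - {Q} \<subseteq> Tvars l")
    case True
    let ?s = "map (\<lambda>j. lookup m (X j) + 1) [1..<l+1]" and ?r = "map (\<lambda>j. lookup m (Y j)) [1..<l+1]"
    have S: "{(u, v). length u = length ?s \<and> length v = length ?s \<and> sorted_wrt (>) u
               \<and> (\<forall>x\<in>set u. 0 < x) \<and> (\<forall>x\<in>set v. 0 < x) \<and> (\<Sum>j<length ?s. u ! j * v ! j) = lookup m Q} = ?S"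
      by (auto simp: pair_index_def pos_tuples_def decr_tuples_def pair_weight_def simp del: upt_Suc)
    have "Tgen l m = (\<Sum>(u,v)\<in>?S. \<Prod>j<length ?s. of_nat (u ! j) ^ (?r ! j) / fact (?r ! j)
                                     * of_nat (v ! j) ^ (?s ! j - 1) / fact (?s ! j - 1))"
      using True unfolding Tgen_def bibracket_def S[symmetric] Tvars_def by (auto simp del: upt_Suc)
    also have "\<dots> = (\<Sum>(u,v)\<in>?S. \<Prod>j<l. of_nat (u!j) ^ lookup m (Y (Suc j)) / fact (lookup m (Y (Suc j)))
                  * of_nat (v!j) ^ lookup m (X (Suc j)) / fact (lookup m (X (Suc j))))"
      by (intro sum.cong refl prod.cong) (auto simp: nth_upt simp del: upt_Suc)
    also have "\<dots> = (\<Sum>(u,v)\<in>?S. qexp (pair_weight u v) (?C u v) m)"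
      using True
      by (intro sum.cong refl) (auto simp: qexp_pair_coeffs_coord_apply pair_index_def decr_tuples_def)
    finally show ?thesis by (simp add: mps_sum_pair_index_apply)
  next
    case False
    then obtain w where w: "w \<in> keys m" "w \<noteq> Q" "w \<notin> Tvars l" by auto
    have "qexp (pair_weight u v) (?C u v) m = 0" if "(u, v) \<in> pair_index l" for u v
      using that w qexp_nonzero_keys pair_coeffs_coord_other
      by (fastforce simp: pair_index_def decr_tuples_def)
    then show ?thesis
      using False by (auto simp: Tgen_def Tvars_def mps_sum_pair_index_apply intro!: sum.neutral)
  qed
qed

section \<open>Conjugation of the index pairs\<close>

text \<open>\<open>rev_prefix_sums v = (v\<^sub>1 + \<dots> + v\<^sub>l, \<dots>, v\<^sub>1 + v\<^sub>2, v\<^sub>1)\<close> is strictly decreasing when \<open>v > 0\<close>;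
  its inverse \<open>rev_gaps u = (u\<^sub>l, u\<^sub>l\<^sub>-\<^sub>1 - u\<^sub>l, \<dots>, u\<^sub>1 - u\<^sub>2)\<close> lists the gaps of \<open>u\<close> from the bottom.
  Lists are indexed from \<open>0\<close>, so \<open>u ! i\<close> is \<open>u\<^sub>i\<^sub>+\<^sub>1\<close>.\<close>
definition rev_prefix_sums :: "nat list \<Rightarrow> nat list" where
  "rev_prefix_sums v = map (\<lambda>i. \<Sum>j<length v - i. v!j) [0..<length v]"

definition rev_gaps :: "nat list \<Rightarrow> nat list" where
  "rev_gaps u = map (\<lambda>k. u!(length u - 1 - k) - (if k = 0 then 0 else u!(length u - k))) [0..<length u]"

lemma length_rev_prefix_sums [simp]: "length (rev_prefix_sums v) = length v"
  by (simp add: rev_prefix_sums_def)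

lemma length_rev_gaps [simp]: "length (rev_gaps u) = length u"
  by (simp add: rev_gaps_def)

lemma nth_rev_prefix_sums: "i < length v \<Longrightarrow> rev_prefix_sums v ! i = (\<Sum>j<length v - i. v!j)"
  by (simp add: rev_prefix_sums_def)

lemma nth_rev_gaps: "k < length u \<Longrightarrow> rev_gaps u ! k = u!(length u - 1 - k) - (if k = 0 then 0 else u!(length u - k))"
  by (simp add: rev_gaps_def)

lemma sum_telescope_mono:
  "(\<And>k. 1 \<le> k \<Longrightarrow> k < n \<Longrightarrow> b (k - 1) \<le> b k) \<Longrightarrow> 1 \<le> (n::nat) \<Longrightarrow>
    (\<Sum>k<n. b k - (if k = 0 then 0 else b (k - 1))) = (b (n - 1) :: nat)"
proof (induction n)
  case 0 then show ?case by simp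
next
  case (Suc n)
  show ?case
  proof (cases "n = 0")
    case True then show ?thesis by simp
  next
    case False
    then have IH: "(\<Sum>k<n. b k - (if k = 0 then 0 else b (k - 1))) = b (n - 1)"
      using Suc.prems by (intro Suc.IH) auto
    have "b (n - 1) \<le> b n" using Suc.prems(1)[of n] False by simp
    then show ?thesis using IH False by simp
  qed
qed

lemma decr_tuples_nth_less: "u \<in> decr_tuples l \<Longrightarrow> i < j \<Longrightarrow> j < length u \<Longrightarrow> u!j < u!i"
  unfolding decr_tuples_def by (auto simp: sorted_wrt_iff_nth_less)

lemma decr_tuples_nth_pos: "u \<in> decr_tuples l \<Longrightarrow> i < length u \<Longrightarrow> 0 < u!i"
  unfolding decr_tuples_def by auto

lemma rev_prefix_sums_rev_gaps:
  assumes u: "u \<in> decr_tuples l"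
  shows "rev_prefix_sums (rev_gaps u) = u"
proof (rule nth_equalityI)
  show "length (rev_prefix_sums (rev_gaps u)) = length u" by simp
  fix i assume i: "i < length (rev_prefix_sums (rev_gaps u))"
  let ?n = "length u"
  let ?b = "\<lambda>k. u!(?n - 1 - k)"
  have "rev_prefix_sums (rev_gaps u) ! i = (\<Sum>k<?n - i. rev_gaps u ! k)" using i by (simp add: nth_rev_prefix_sums)
  also have "\<dots> = (\<Sum>k<?n - i. ?b k - (if k = 0 then 0 else ?b (k - 1)))"
  proof (rule sum.cong)
    fix k assume k: "k \<in> {..<?n - i}"
    then have "?n - 1 - (k - 1) = ?n - k" if "k \<noteq> 0" using that by simp
    then show "rev_gaps u ! k = ?b k - (if k = 0 then 0 else ?b (k - 1))" using k by (simp add: nth_rev_gaps)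
  qed simp
  also have "\<dots> = ?b (?n - i - 1)"
  proof (rule sum_telescope_mono)
    fix k assume k: "1 \<le> k" "k < ?n - i"
    have "?n - 1 - (k - 1) = ?n - k" using k by simp
    moreover have "u!(?n - k) < u!(?n - 1 - k)" using k i by (intro decr_tuples_nth_less[OF u]) auto
    ultimately show "?b (k - 1) \<le> ?b k" by simp
  qed (use i in simp)
  also have "\<dots> = u!i" using i by (simp add: Suc_diff_Suc)
  finally show "rev_prefix_sums (rev_gaps u) ! i = u ! i" .
qed

lemma rev_gaps_rev_prefix_sums: "rev_gaps (rev_prefix_sums v) = v"
proof (rule nth_equalityI)
  show "length (rev_gaps (rev_prefix_sums v)) = length v" by simp
  fix k assume k: "k < length (rev_gaps (rev_prefix_sums v))"
  let ?n = "length v"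
  have k': "k < ?n" using k by simp
  have 1: "rev_prefix_sums v ! (?n - 1 - k) = (\<Sum>j<Suc k. v!j)" using k' by (simp add: nth_rev_prefix_sums Suc_diff_Suc)
  have 2: "rev_prefix_sums v ! (?n - k) = (\<Sum>j<k. v!j)" if "k \<noteq> 0" using k' that by (simp add: nth_rev_prefix_sums)
  show "rev_gaps (rev_prefix_sums v) ! k = v ! k"
    using k' 1 2 by (simp add: nth_rev_gaps)
qed

lemma rev_prefix_sums_decr_tuples:
  assumes l: "length v = l" and pv: "\<forall>x\<in>set v. 0 < x"
  shows "rev_prefix_sums v \<in> decr_tuples l"
proof -
  have pos: "0 < v!j" if "j < length v" for j using pv that by auto
  have dec: "rev_prefix_sums v ! j < rev_prefix_sums v ! i" if ij: "i < j" "j < length v" for i j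
  proof -
    have "(\<Sum>x<length v - i. v!x) = (\<Sum>x<length v - j. v!x) + (\<Sum>x\<in>{length v - j..<length v - i}. v!x)"
    proof -
      have e: "{..<length v - i} = {..<length v - j} \<union> {length v - j..<length v - i}" using ij by auto
      show ?thesis by (subst e) (rule sum.union_disjoint; auto)
    qed
    moreover have "0 < (\<Sum>x\<in>{length v - j..<length v - i}. v!x)"
    proof -
      have "v!(length v - j) \<le> (\<Sum>x\<in>{length v - j..<length v - i}. v!x)"
        using ij by (intro member_le_sum) auto
      moreover have "0 < v!(length v - j)" using pos ij by simp
      ultimately show ?thesis by linarith
    qed
    ultimately show ?thesis using ij by (simp add: nth_rev_prefix_sums)
  qed
  have ps: "0 < rev_prefix_sums v ! i" if "i < length v" for i
  proof -
    have "v!0 \<le> (\<Sum>x<length v - i. v!x)" using that by (intro member_le_sum) auto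
    moreover have "0 < v!0" using pos[of 0] that by (cases v) auto
    ultimately have "0 < (\<Sum>x<length v - i. v!x)" by linarith
    then show ?thesis using that by (simp add: nth_rev_prefix_sums)
  qed
  have s: "sorted_wrt (>) (rev_prefix_sums v)" unfolding sorted_wrt_iff_nth_less using dec by auto
  have p: "\<forall>x\<in>set (rev_prefix_sums v). 0 < x"
  proof
    fix x assume "x \<in> set (rev_prefix_sums v)"
    then obtain i where "i < length v" "x = rev_prefix_sums v ! i" by (auto simp: in_set_conv_nth)
    then show "0 < x" using ps by simp
  qed
  show ?thesis using l s p by (simp add: decr_tuples_def)
qed

lemma rev_gaps_pos:
  assumes u: "u \<in> decr_tuples l"
  shows "\<forall>x\<in>set (rev_gaps u). 0 < x"
proof
  fix x assume "x \<in> set (rev_gaps u)"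
  then obtain k where k: "k < length u" "x = rev_gaps u ! k" by (auto simp: in_set_conv_nth)
  show "0 < x"
  proof (cases "k = 0")
    case True then show ?thesis using k decr_tuples_nth_pos[OF u, of "length u - 1"] by (simp add: nth_rev_gaps)
  next
    case False
    then have "u!(length u - k) < u!(length u - 1 - k)" using k by (intro decr_tuples_nth_less[OF u]) auto
    then show ?thesis using k False by (simp add: nth_rev_gaps)
  qed
qed

lemma sum_lessThan_if_less: "k \<le> (n::nat) \<Longrightarrow> (\<Sum>j<n. if j < k then g j else 0) = (\<Sum>j<k. g j)"
proof -
  assume k: "k \<le> n"
  have "(\<Sum>j<n. if j < k then g j else 0) = (\<Sum>j<k. if j < k then g j else 0)"
    using k by (intro sum.mono_neutral_right) auto
  also have "\<dots> = (\<Sum>j<k. g j)" by (rule sum.cong) auto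
  finally show ?thesis .
qed

lemma pair_weight_conjugate:
  assumes "(u,v) \<in> pair_index l"
  shows "pair_weight (rev_prefix_sums v) (rev_gaps u) = pair_weight u v"
proof -
  have lu: "length u = l" and lv: "length v = l" and u: "u \<in> decr_tuples l" using assms by (auto simp: pair_index_def pos_tuples_def decr_tuples_def)
  have "pair_weight (rev_prefix_sums v) (rev_gaps u) = (\<Sum>i<l. (\<Sum>j<l - i. v!j) * rev_gaps u ! i)"
    unfolding pair_weight_def using lv by (intro sum.cong) (auto simp: nth_rev_prefix_sums)
  also have "\<dots> = (\<Sum>i<l. \<Sum>j<l. if j < l - i then v!j * rev_gaps u ! i else 0)"
    by (intro sum.cong refl) (simp add: sum_lessThan_if_less sum_distrib_right)
  also have "\<dots> = (\<Sum>j<l. \<Sum>i<l. if j < l - i then v!j * rev_gaps u ! i else 0)"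
    by (rule sum.swap)
  also have "\<dots> = (\<Sum>j<l. \<Sum>i<l. if i < l - j then v!j * rev_gaps u ! i else 0)"
    by (intro sum.cong refl) auto
  also have "\<dots> = (\<Sum>j<l. v!j * (\<Sum>i<l - j. rev_gaps u ! i))"
    by (intro sum.cong refl) (simp add: sum_lessThan_if_less sum_distrib_left)
  also have "\<dots> = (\<Sum>j<l. v!j * (rev_prefix_sums (rev_gaps u) ! j))"
    using lu by (intro sum.cong refl) (simp add: nth_rev_prefix_sums)
  also have "\<dots> = pair_weight u v" unfolding rev_prefix_sums_rev_gaps[OF u] pair_weight_def lu by (simp add: mult.commute)
  finally show ?thesis .
qed

definition Xv_coeffs :: "nat \<Rightarrow> nat \<Rightarrow> var \<Rightarrow> rat" where
  "Xv_coeffs l i = (if i = l + 1 then (\<lambda>_. 0) else coord (X i))"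

lemma Xv_coeffs_apply: "Xv_coeffs l i w = (if i \<noteq> l + 1 \<and> w = X i then 1 else 0)"
  by (simp add: Xv_coeffs_def coord_def)

definition Ysum_coeffs :: "nat \<Rightarrow> var \<Rightarrow> rat" where
  "Ysum_coeffs k w = sum_list (map (\<lambda>i. coord (Y i) w) [1..<k+1])"

lemma Ysum_coeffs_eq_sum: "Ysum_coeffs k w = (\<Sum>i\<in>{1..k}. coord (Y i) w)"
proof -
  have "Ysum_coeffs k w = sum (\<lambda>i. coord (Y i) w) (set [1..<k+1])"
    unfolding Ysum_coeffs_def by (rule interv_sum_list_conv_sum_set_nat)
  also have "set [1..<k+1] = {1..k}" by auto
  finally show ?thesis .
qed

lemma Ysum_coeffs_Y: "Ysum_coeffs k (Y c) = (if 1 \<le> c \<and> c \<le> k then 1 else 0)"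
proof -
  have "Ysum_coeffs k (Y c) = (\<Sum>i\<in>{1..k}. if i = c then 1 else 0)"
    unfolding Ysum_coeffs_eq_sum coord_def by (intro sum.cong) auto
  then show ?thesis by simp
qed

lemma Ysum_coeffs_not_Y: "(\<And>c. w \<noteq> Y c) \<Longrightarrow> Ysum_coeffs k w = 0"
  unfolding Ysum_coeffs_eq_sum coord_def by (intro sum.neutral) auto

text \<open>The coefficients of the arguments \<open>X\<^sub>l\<^sub>+\<^sub>1\<^sub>-\<^sub>j - X\<^sub>l\<^sub>+\<^sub>2\<^sub>-\<^sub>j\<close> and \<open>Y\<^sub>1 + \<dots> + Y\<^sub>l\<^sub>+\<^sub>1\<^sub>-\<^sub>j\<close> of \<open>E\<close> and \<open>L\<close>
  in the second expression.\<close>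
definition dual_X_coeffs :: "nat \<Rightarrow> nat \<Rightarrow> var \<Rightarrow> rat" where
  "dual_X_coeffs l j w = Xv_coeffs l (l + 1 - j) w - Xv_coeffs l (l + 2 - j) w"

definition dual_Y_coeffs :: "nat \<Rightarrow> nat \<Rightarrow> var \<Rightarrow> rat" where
  "dual_Y_coeffs l j w = Ysum_coeffs (l + 1 - j) w"

lemma pair_coeffs_dual_apply:
  assumes "length u = l"
  shows "pair_coeffs (dual_X_coeffs l) (dual_Y_coeffs l) u v w
       = (\<Sum>i<l. of_nat (u!i) * Xv_coeffs l (l - i) w) - (\<Sum>i<l. of_nat (u!i) * Xv_coeffs l (l + 1 - i) w)
         + (\<Sum>i<l. of_nat (v!i) * Ysum_coeffs (l - i) w)"
proof -
  have "l + 1 - Suc i = l - i" "l + 2 - Suc i = l + 1 - i" if "i < l" for i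
    using that by auto
  then have "pair_coeffs (dual_X_coeffs l) (dual_Y_coeffs l) u v w
      = (\<Sum>i<l. of_nat (u!i) * Xv_coeffs l (l - i) w - of_nat (u!i) * Xv_coeffs l (l + 1 - i) w
                  + of_nat (v!i) * Ysum_coeffs (l - i) w)"
    unfolding pair_coeffs_def assms
    by (intro sum.cong refl) (simp add: dual_X_coeffs_def dual_Y_coeffs_def algebra_simps)
  then show ?thesis by (simp add: sum.distrib sum_subtractf)
qed

lemma pair_coeffs_dual_other:
  assumes "length u = l" "w \<notin> Tvars l"
  shows "pair_coeffs (dual_X_coeffs l) (dual_Y_coeffs l) u v w = 0"
proof -
  have "X (l - i) \<in> Tvars l" "i \<noteq> 0 \<Longrightarrow> X (l + 1 - i) \<in> Tvars l" if "i < l" for i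
    using that by (auto simp: Tvars_def)
  then have X0: "Xv_coeffs l (l - i) w = 0" "Xv_coeffs l (l + 1 - i) w = 0" if "i < l" for i
    using that assms(2) by (auto simp: Xv_coeffs_apply)
  have Y0: "Ysum_coeffs k w = 0" if "k \<le> l" for k
  proof (cases "\<exists>c. w = Y c")
    case True
    then obtain c where "w = Y c" by blast
    then show ?thesis using assms(2) that by (auto simp: Ysum_coeffs_Y Tvars_def)
  qed (auto simp: Ysum_coeffs_not_Y)
  from X0 Y0 show ?thesis using assms(1) by (simp add: pair_coeffs_dual_apply)
qed

lemma pair_coeffs_dual_X:
  assumes u: "u \<in> decr_tuples l" and a: "a < l"
  shows "pair_coeffs (dual_X_coeffs l) (dual_Y_coeffs l) u v (X (Suc a)) = of_nat (rev_gaps u ! a)"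
proof -
  have lu: "length u = l" using u by (simp add: decr_tuples_def)
  have "(\<Sum>i<l. of_nat (u!i) * Xv_coeffs l (l - i) (X (Suc a))) = (\<Sum>i<l. if i = l - 1 - a then of_nat (u!i) else 0)"
    using a by (intro sum.cong refl) (auto simp: Xv_coeffs_apply)
  moreover have "(\<Sum>i<l. of_nat (u!i) * Xv_coeffs l (l + 1 - i) (X (Suc a)))
               = (\<Sum>i<l. if i = l - a then of_nat (u!i) else 0)"
    using a by (intro sum.cong refl) (auto simp: Xv_coeffs_apply)
  moreover have "(\<Sum>i<l. of_nat (v!i) * Ysum_coeffs (l - i) (X (Suc a))) = 0"
    by (simp add: Ysum_coeffs_not_Y)
  moreover have "of_nat (rev_gaps u ! a) = of_nat (u!(l - 1 - a)) - (if a = 0 then 0 else (of_nat (u!(l - a)) :: rat))"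
  proof (cases "a = 0")
    case True then show ?thesis using a lu by (simp add: nth_rev_gaps)
  next
    case False
    then have "u!(l - a) < u!(l - 1 - a)" using a lu by (intro decr_tuples_nth_less[OF u]) auto
    then show ?thesis using False a lu by (simp add: nth_rev_gaps of_nat_diff)
  qed
  ultimately show ?thesis using a lu by (simp add: pair_coeffs_dual_apply)
qed

lemma pair_coeffs_dual_Y:
  assumes "length u = l" "length v = l" "a < l"
  shows "pair_coeffs (dual_X_coeffs l) (dual_Y_coeffs l) u v (Y (Suc a)) = of_nat (rev_prefix_sums v ! a)"
proof -
  have "(\<Sum>i<l. of_nat (v!i) * Ysum_coeffs (l - i) (Y (Suc a))) = (\<Sum>i<l. if i < l - a then of_nat (v!i) else 0)"
    by (intro sum.cong refl) (auto simp: Ysum_coeffs_Y)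
  also have "\<dots> = of_nat (rev_prefix_sums v ! a)"
    using assms by (simp add: sum_lessThan_if_less nth_rev_prefix_sums)
  finally show ?thesis
    using assms(1) by (simp add: pair_coeffs_dual_apply Xv_coeffs_apply)
qed

lemma pair_coeffs_conjugate:
  assumes "(u,v) \<in> pair_index l"
  shows "pair_coeffs (dual_X_coeffs l) (dual_Y_coeffs l) u v
       = pair_coeffs (\<lambda>j. coord (Y j)) (\<lambda>j. coord (X j)) (rev_prefix_sums v) (rev_gaps u)"
proof
  fix w
  have u: "u \<in> decr_tuples l" and lu: "length u = l" and lv: "length v = l"
    using assms by (auto simp: pair_index_def pos_tuples_def decr_tuples_def)
  show "pair_coeffs (dual_X_coeffs l) (dual_Y_coeffs l) u v w
      = pair_coeffs (\<lambda>j. coord (Y j)) (\<lambda>j. coord (X j)) (rev_prefix_sums v) (rev_gaps u) w"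
  proof (cases "w \<in> Tvars l")
    case True
    then obtain a where "a < l" "w = X (Suc a) \<or> w = Y (Suc a)" unfolding Tvars_image by auto
    then show ?thesis
      using u lu lv by (auto simp: pair_coeffs_dual_X pair_coeffs_dual_Y pair_coeffs_coord_X pair_coeffs_coord_Y)
  next
    case False
    then show ?thesis using lu lv by (simp add: pair_coeffs_dual_other pair_coeffs_coord_other)
  qed
qed

lemma pair_sum_conjugate:
  "mps_sum (\<lambda>(u,v). qexp (pair_weight u v) (pair_coeffs (dual_X_coeffs l) (dual_Y_coeffs l) u v)) (pair_index l) =
   mps_sum (\<lambda>(u,v). qexp (pair_weight u v) (pair_coeffs (\<lambda>j. coord (Y j)) (\<lambda>j. coord (X j)) u v)) (pair_index l)"
proof -
  let ?h = "\<lambda>(u,v). (rev_prefix_sums v, rev_gaps u)"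
  have inJJ: "?h x \<in> pair_index l" if "x \<in> pair_index l" for x
  proof -
    obtain u v where x: "x = (u,v)" by force
    have u: "u \<in> decr_tuples l" and lv: "length v = l" and pv: "\<forall>y\<in>set v. 0 < y" using that x by (auto simp: pair_index_def pos_tuples_def)
    have "length (rev_gaps u) = l" using u by (simp add: decr_tuples_def)
    then show ?thesis using rev_prefix_sums_decr_tuples[OF lv pv] rev_gaps_pos[OF u] x by (simp add: pair_index_def pos_tuples_def)
  qed
  have inv: "?h (?h x) = x" if "x \<in> pair_index l" for x
  proof -
    obtain u v where x: "x = (u,v)" by force
    have u: "u \<in> decr_tuples l" using that x by (auto simp: pair_index_def pos_tuples_def)
    show ?thesis using x rev_prefix_sums_rev_gaps[OF u] rev_gaps_rev_prefix_sums[of v] by simp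
  qed
  have bij: "bij_betw ?h (pair_index l) (pair_index l)"
    by (rule bij_betw_byWitness[where f'="?h"]) (use inv inJJ in auto)
  have "mps_sum (\<lambda>(u,v). qexp (pair_weight u v) (pair_coeffs (\<lambda>j. coord (Y j)) (\<lambda>j. coord (X j)) u v)) (pair_index l) =
        mps_sum (\<lambda>x. (\<lambda>(u,v). qexp (pair_weight u v) (pair_coeffs (\<lambda>j. coord (Y j)) (\<lambda>j. coord (X j)) u v)) (?h x)) (pair_index l)"
    by (rule mps_sum_reindex[OF bij])
  also have "\<dots> = mps_sum (\<lambda>(u,v). qexp (pair_weight u v) (pair_coeffs (dual_X_coeffs l) (dual_Y_coeffs l) u v)) (pair_index l)"
  proof (rule mps_sum_cong)
    fix x assume x: "x \<in> pair_index l"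
    obtain u v where xuv: "x = (u,v)" by force
    have "pair_coeffs (\<lambda>j. coord (Y j)) (\<lambda>j. coord (X j)) (rev_prefix_sums v) (rev_gaps u) = pair_coeffs (dual_X_coeffs l) (dual_Y_coeffs l) u v"
      using pair_coeffs_conjugate[of u v l] x xuv by auto
    then show "(\<lambda>x. (\<lambda>(u,v). qexp (pair_weight u v) (pair_coeffs (\<lambda>j. coord (Y j)) (\<lambda>j. coord (X j)) u v)) (?h x)) x =
          (\<lambda>(u,v). qexp (pair_weight u v) (pair_coeffs (dual_X_coeffs l) (dual_Y_coeffs l) u v)) x"
      using pair_weight_conjugate[of u v l] x xuv by simp
  qed
  finally show ?thesis by simp
qed


lemma mps_var_linform:
  assumes "v \<noteq> Q"
  shows "mps_var v = linform (coord v)"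
proof
  fix m :: mono
  show "mps_var v m = linform (coord v) m"
  proof (cases "lookup m Q = 0 \<and> mono_deg m = 1")
    case True
    then have "mono_deg m = 1" by simp
    then obtain w where w: "m = Poly_Mapping.single w 1" by (rule mono_deg_eq_1_single)
    have "Poly_Mapping.single w (1::nat) = Poly_Mapping.single v 1 \<longleftrightarrow> w = v"
      by (metis lookup_single_eq lookup_single_not_eq one_neq_zero)
    then show ?thesis using True w by (auto simp: mps_var_def linform_def coord_def)
  next
    case False
    then have "m \<noteq> Poly_Mapping.single v 1" using assms by (auto simp: mono_deg_single lookup_single)
    then show ?thesis using False by (auto simp: mps_var_def linform_def)
  qed
qed

lemma mps_const_0_linform: "mps_const 0 = linform (\<lambda>_. 0)"
  by (auto simp: mps_const_def linform_def fun_eq_iff)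

lemma mps_sub_linform: "mps_sub (linform a) (linform b) = linform (\<lambda>w. a w - b w)"
  by (auto simp: mps_sub_def linform_def fun_eq_iff sum_subtractf)

lemma mps_add_linform: "mps_add (linform a) (linform b) = linform (\<lambda>w. a w + b w)"
  by (auto simp: mps_add_def linform_def fun_eq_iff sum.distrib)

lemma mps_listsum_linform:
  "mps_listsum (map (\<lambda>i. linform (f i)) xs) = linform (\<lambda>w. sum_list (map (\<lambda>i. f i w) xs))"
  by (induction xs) (simp_all add: mps_listsum_def mps_const_0_linform mps_add_linform)

lemma Ysum_linform: "Ysum k = linform (Ysum_coeffs k)"
proof -
  have "map (\<lambda>i. mps_var (Y i)) [1..<k+1] = map (\<lambda>i. linform (coord (Y i))) [1..<k+1]"
    by (intro map_cong refl mps_var_linform) simp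
  then show ?thesis unfolding Ysum_def Ysum_coeffs_def[abs_def] mps_listsum_linform[symmetric] by (rule arg_cong)
qed

lemma Xv_linform: "Xv l i = linform (Xv_coeffs l i)"
  by (simp add: Xv_def Xv_coeffs_def mps_const_0_linform mps_var_linform)

lemma dual_X_linform: "mps_sub (Xv l (l + 1 - j)) (Xv l (l + 2 - j)) = linform (dual_X_coeffs l j)"
  by (simp add: Xv_linform mps_sub_linform dual_X_coeffs_def[abs_def])

lemma dual_Y_linform: "Ysum (l + 1 - j) = linform (dual_Y_coeffs l j)"
  by (simp add: Ysum_linform dual_Y_coeffs_def[abs_def])

lemma Tgen_eq_sum_En_Ln:
  "Tgen l = mps_sum (\<lambda>u. mps_listprod
                    (map (\<lambda>j. mps_mult (En (u ! (j - 1)) (mps_var (Y j)))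
                                      (Ln (u ! (j - 1)) (mps_var (X j)))) [1..<l+1]))
                  (decr_tuples l)"
  unfolding Tgen_eq_pair_sum mps_sum_En_Ln_linform[symmetric] by (simp add: mps_var_linform)

lemma Tgen_eq_sum_En_Ln_dual:
  "Tgen l = mps_sum (\<lambda>u. mps_listprod
                    (map (\<lambda>j. mps_mult (En (u ! (j - 1)) (mps_sub (Xv l (l + 1 - j)) (Xv l (l + 2 - j))))
                                      (Ln (u ! (j - 1)) (Ysum (l - j + 1)))) [1..<l+1]))
                  (decr_tuples l)"
proof -
  have "Ysum (l - j + 1) = linform (dual_Y_coeffs l j)" if "j \<in> set [1..<l+1]" for j
  proof -
    have "l - j + 1 = l + 1 - j" using that by auto
    then show ?thesis by (simp only: dual_Y_linform)
  qed
  then show ?thesis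
    unfolding Tgen_eq_pair_sum pair_sum_conjugate[symmetric] mps_sum_En_Ln_linform[symmetric]
    by (intro mps_sum_cong arg_cong[where f = mps_listprod] map_cong) (auto simp: dual_X_linform[symmetric])
qed

section \<open>Substitution of linear forms\<close>

definition homogeneous :: "nat \<Rightarrow> mps \<Rightarrow> bool" where
  "homogeneous n f \<longleftrightarrow> (\<forall>m. f m \<noteq> 0 \<longrightarrow> mono_deg m = n)"

lemma homogeneous_mult: "homogeneous a f \<Longrightarrow> homogeneous b g \<Longrightarrow> homogeneous (a + b) (mps_mult f g)"
  unfolding homogeneous_def by (metis mono_deg_add mps_mult_nonzeroE)

lemma homogeneous_const_1: "homogeneous 0 (mps_const 1)"
  by (simp add: homogeneous_def mps_const_def mono_deg_def)

lemma homogeneous_power: "homogeneous 1 f \<Longrightarrow> homogeneous k (mps_power f k)"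
proof (induction k)
  case 0 then show ?case by (simp add: mps_power_def homogeneous_const_1)
next
  case (Suc k)
  then have "homogeneous (1 + k) (mps_mult f (mps_power f k))" by (intro homogeneous_mult) auto
  then show ?case by (simp add: mps_power_def)
qed

lemma homogeneous_linform: "homogeneous 1 (linform la)"
  by (simp add: homogeneous_def linform_def)

lemma homogeneous_var_Q: "homogeneous 1 (mps_var Q)"
  by (simp add: homogeneous_def mps_var_def mono_deg_single)

lemma homogeneous_smult: "homogeneous n f \<Longrightarrow> homogeneous n (mps_smult c f)"
  by (simp add: homogeneous_def mps_smult_def)

definition mono_eval_step :: "(var \<Rightarrow> mps) \<Rightarrow> mono \<Rightarrow> var \<Rightarrow> mps \<Rightarrow> mps" where
  "mono_eval_step \<sigma> m v acc = mps_mult (mps_power (\<sigma> v) (lookup m v)) acc"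

lemma comp_fun_commute_mono_eval_step: "comp_fun_commute (mono_eval_step \<sigma> m)"
proof
  fix x y
  show "mono_eval_step \<sigma> m y \<circ> mono_eval_step \<sigma> m x = mono_eval_step \<sigma> m x \<circ> mono_eval_step \<sigma> m y"
    by (rule ext) (simp only: comp_def mono_eval_step_def mps_mult_left_commute)
qed

lemma mono_eval_fold: "mono_eval \<sigma> m = Finite_Set.fold (mono_eval_step \<sigma> m) (mps_const 1) (keys m)"
  unfolding mono_eval_def mono_eval_step_def ..

lemma fold_mono_eval_step_insert:
  "finite A \<Longrightarrow> x \<notin> A \<Longrightarrow> Finite_Set.fold (mono_eval_step \<sigma> m) z (insert x A) = mono_eval_step \<sigma> m x (Finite_Set.fold (mono_eval_step \<sigma> m) z A)"
proof -
  assume "finite A" "x \<notin> A"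
  interpret comp_fun_commute "mono_eval_step \<sigma> m" by (rule comp_fun_commute_mono_eval_step)
  show ?thesis using \<open>finite A\<close> \<open>x \<notin> A\<close> by (rule fold_insert)
qed

lemma homogeneous_fold:
  assumes "\<And>v. homogeneous 1 (\<sigma> v)" "finite A"
  shows "homogeneous (\<Sum>v\<in>A. lookup m v) (Finite_Set.fold (mono_eval_step \<sigma> m) (mps_const 1) A)"
  using assms(2)
proof (induction A rule: finite_induct)
  case empty then show ?case by (simp add: homogeneous_const_1)
next
  case (insert x A)
  have "homogeneous (lookup m x + (\<Sum>v\<in>A. lookup m v)) (mono_eval_step \<sigma> m x (Finite_Set.fold (mono_eval_step \<sigma> m) (mps_const 1) A))"
    unfolding mono_eval_step_def[of \<sigma> m x] using insert assms(1) by (intro homogeneous_mult homogeneous_power) auto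
  moreover have "Finite_Set.fold (mono_eval_step \<sigma> m) (mps_const 1) (insert x A) = mono_eval_step \<sigma> m x (Finite_Set.fold (mono_eval_step \<sigma> m) (mps_const 1) A)"
    using insert by (intro fold_mono_eval_step_insert) auto
  moreover have "(\<Sum>v\<in>insert x A. lookup m v) = lookup m x + (\<Sum>v\<in>A. lookup m v)" using insert by simp
  ultimately show ?case by simp
qed

lemma homogeneous_mono_eval: "(\<And>v. homogeneous 1 (\<sigma> v)) \<Longrightarrow> homogeneous (mono_deg m) (mono_eval \<sigma> m)"
  unfolding mono_eval_fold mono_deg_def by (rule homogeneous_fold) auto

lemma mps_subst_apply:
  assumes K: "finite K" and supp: "\<And>m. f m \<noteq> 0 \<Longrightarrow> keys m \<subseteq> K" and hom: "\<And>v. homogeneous 1 (\<sigma> v)"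
  shows "mps_subst \<sigma> f m' = (\<Sum>m\<in>{m. keys m \<subseteq> K \<and> mono_deg m \<le> mono_deg m'}. f m * mono_eval \<sigma> m m')"
proof -
  let ?M = "{m. keys m \<subseteq> K \<and> mono_deg m \<le> mono_deg m'}"
  have "f m = 0 \<or> mono_eval \<sigma> m m' = 0" if "m \<notin> ?M" for m
    using that supp homogeneous_mono_eval[OF hom, of m] unfolding homogeneous_def by force
  then have "mps_subst \<sigma> f m' = (\<Sum>m\<in>?M. mps_smult (f m) (mono_eval \<sigma> m) m')"
    unfolding mps_subst_def
    by (intro mps_sum_eq_sum finite_mono_deg_le[OF K]) (auto simp: mps_smult_def)
  then show ?thesis by (simp add: mps_smult_def)
qed

lemma mps_subst_mps_sum:
  assumes lf: "locally_finite F I d" and K: "finite K"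
    and supp: "\<And>i m. i \<in> I \<Longrightarrow> F i m \<noteq> 0 \<Longrightarrow> keys m \<subseteq> K"
    and hom: "\<And>v. homogeneous 1 (\<sigma> v)"
  shows "mps_subst \<sigma> (mps_sum F I) = mps_sum (\<lambda>i. mps_subst \<sigma> (F i)) I"
proof
  fix m'
  let ?M = "{m. keys m \<subseteq> K \<and> mono_deg m \<le> mono_deg m'}"
  let ?J = "{i\<in>I. d i \<le> mono_deg m'}"
  have supp_sum: "keys m \<subseteq> K" if "mps_sum F I m \<noteq> 0" for m
    using that supp unfolding mps_sum_def by (metis (mono_tags, lifting) mem_Collect_eq sum.neutral)
  have "mps_sum F I m = (\<Sum>i\<in>?J. F i m)" if "m \<in> ?M" for m
    using that mps_sum_eq_sum_order_le[OF lf, of m "mono_deg m'"] by auto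
  then have "mps_subst \<sigma> (mps_sum F I) m' = (\<Sum>m\<in>?M. \<Sum>i\<in>?J. F i m * mono_eval \<sigma> m m')"
    by (simp add: mps_subst_apply[OF K supp_sum hom] sum_distrib_right)
  also have "\<dots> = (\<Sum>i\<in>?J. mps_subst \<sigma> (F i) m')"
    by (subst sum.swap) (intro sum.cong refl; use mps_subst_apply[OF K supp hom] in auto)
  also have "\<dots> = mps_sum (\<lambda>i. mps_subst \<sigma> (F i)) I m'"
  proof (rule mps_sum_eq_sum[symmetric])
    fix i assume i: "i \<in> I" "i \<notin> ?J"
    then have "F i m = 0" if "m \<in> ?M" for m
      using that lf unfolding locally_finite_def by force
    then show "mps_subst \<sigma> (F i) m' = 0"
      using i supp by (subst mps_subst_apply[OF K _ hom]) auto
  qed (use lf in \<open>auto simp: locally_finite_def\<close>)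
  finally show "mps_subst \<sigma> (mps_sum F I) m' = mps_sum (\<lambda>i. mps_subst \<sigma> (F i)) I m'" .
qed

lemma qexp_single_add:
  assumes "x \<noteq> Q" "x \<notin> keys m'"
  shows "qexp N la (Poly_Mapping.single x k + m') = (la x ^ k / fact k) * qexp N la m'"
proof (cases "k = 0")
  case True then show ?thesis by simp
next
  case False
  let ?m = "Poly_Mapping.single x k + m'"
  have lkm: "lookup ?m w = (if w = x then k else lookup m' w)" for w
    using assms by (auto simp: Poly_Mapping.lookup_add lookup_single in_keys_iff)
  have ksm: "keys ?m - {Q} = insert x (keys m' - {Q})"
    using assms False by (auto simp: in_keys_iff lkm split: if_splits)
  have "(\<Prod>w\<in>keys ?m - {Q}. (la w)^(lookup ?m w) / fact (lookup ?m w)) =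
        (la x)^k / fact k * (\<Prod>w\<in>keys m' - {Q}. (la w)^(lookup ?m w) / fact (lookup ?m w))"
    unfolding ksm using assms by (simp add: prod.insert lkm)
  also have "(\<Prod>w\<in>keys m' - {Q}. (la w)^(lookup ?m w) / fact (lookup ?m w)) = (\<Prod>w\<in>keys m' - {Q}. (la w)^(lookup m' w) / fact (lookup m' w))"
    using assms by (intro prod.cong refl) (auto simp: lkm)
  finally show ?thesis using assms by (simp add: qexp_apply lkm)
qed

lemma mono_eval_single_add:
  assumes "x \<notin> keys m'"
  shows "mono_eval \<sigma> (Poly_Mapping.single x k + m') = mps_mult (mps_power (\<sigma> x) k) (mono_eval \<sigma> m')"
proof (cases "k = 0")
  case True then show ?thesis by (simp add: mps_power_def mps_mult_1_left)
next
  case False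
  let ?m = "Poly_Mapping.single x k + m'"
  have lkm: "lookup ?m w = (if w = x then k else lookup m' w)" for w
    using assms by (auto simp: Poly_Mapping.lookup_add lookup_single in_keys_iff)
  have ksm: "keys ?m = insert x (keys m')"
    using assms False by (auto simp: in_keys_iff lkm split: if_splits)
  have cfc: "comp_fun_commute_on UNIV (mono_eval_step \<sigma> n)" for n using comp_fun_commute_mono_eval_step comp_fun_commute_def' by blast
  have "mono_eval \<sigma> ?m = mono_eval_step \<sigma> ?m x (Finite_Set.fold (mono_eval_step \<sigma> ?m) (mps_const 1) (keys m'))"
    unfolding mono_eval_fold ksm using assms by (intro fold_mono_eval_step_insert) auto
  also have "Finite_Set.fold (mono_eval_step \<sigma> ?m) (mps_const 1) (keys m') = Finite_Set.fold (mono_eval_step \<sigma> m') (mps_const 1) (keys m')"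
    by (rule Finite_Set.fold_cong[OF cfc cfc]) (use assms in \<open>auto simp: mono_eval_step_def lkm fun_eq_iff\<close>)
  finally show ?thesis by (simp add: mono_eval_fold mono_eval_step_def lkm)
qed

lemma mps_power_smult: "mps_power (mps_smult c f) k = mps_smult (c ^ k) (mps_power f k)"
proof (induction k)
  case 0 then show ?case by (simp add: mps_power_def mps_smult_1_left)
next
  case (Suc k)
  have "mps_power (mps_smult c f) (Suc k) = mps_mult (mps_smult c f) (mps_smult (c ^ k) (mps_power f k))"
    using Suc by (simp add: mps_power_def)
  also have "\<dots> = mps_smult (c ^ Suc k) (mps_power f (Suc k))"
    by (simp add: mps_power_def mps_mult_smult_left mps_mult_smult_right mps_smult_smult mult.commute)
  finally show ?case .
qed

lemma mps_exp_series_linform: "mps_sum (\<lambda>k. mps_smult (c ^ k / fact k) (mps_power (linform a) k)) UNIV = qexp 0 (\<lambda>w. c * a w)"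
proof -
  have "mps_sum (\<lambda>k. mps_smult (c ^ k / fact k) (mps_power (linform a) k)) UNIV = mps_exp (linform (\<lambda>w. c * a w))"
    unfolding mps_exp_def mps_smult_linform[symmetric] mps_power_smult
    by (intro mps_sum_cong) (simp add: mps_smult_def fun_eq_iff)
  then show ?thesis by (simp add: mps_exp_linform)
qed

lemma mono_eval_zero: "mono_eval \<sigma> 0 = mps_const 1"
  by (simp add: mono_eval_def)

lemma locally_finite_homogeneous:
  assumes "\<And>i. i \<in> I \<Longrightarrow> homogeneous (d i) (F i)" "\<And>D. finite {i\<in>I. d i \<le> D}"
  shows "locally_finite F I d"
  using assms unfolding locally_finite_def homogeneous_def by auto

lemma bij_betw_single_add:
  fixes A :: "'a set"
  assumes "x \<notin> A"
  shows "bij_betw (\<lambda>(k, m). Poly_Mapping.single x k + m)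
           (UNIV \<times> {m :: 'a \<Rightarrow>\<^sub>0 nat. keys m \<subseteq> A}) {m. keys m \<subseteq> insert x A}"
proof (rule bij_betw_byWitness[where f'="\<lambda>m. (lookup m x, m - Poly_Mapping.single x (lookup m x))"])
  have lookup_x: "lookup m x = 0" if "keys m \<subseteq> A" for m :: "'a \<Rightarrow>\<^sub>0 nat"
    using that assms by (auto simp: in_keys_iff)
  show "\<forall>a\<in>UNIV \<times> {m :: 'a \<Rightarrow>\<^sub>0 nat. keys m \<subseteq> A}.
          (\<lambda>m. (lookup m x, m - Poly_Mapping.single x (lookup m x))) ((\<lambda>(k, m). Poly_Mapping.single x k + m) a) = a"
    by (auto simp: Poly_Mapping.lookup_add lookup_x)
  show "\<forall>m\<in>{m :: 'a \<Rightarrow>\<^sub>0 nat. keys m \<subseteq> insert x A}.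
          (\<lambda>(k, m). Poly_Mapping.single x k + m) (lookup m x, m - Poly_Mapping.single x (lookup m x)) = m"
    by (auto intro!: poly_mapping_eqI simp: Poly_Mapping.lookup_add lookup_minus lookup_single when_def)
  show "(\<lambda>(k, m). Poly_Mapping.single x k + m) ` (UNIV \<times> {m :: 'a \<Rightarrow>\<^sub>0 nat. keys m \<subseteq> A})
      \<subseteq> {m. keys m \<subseteq> insert x A}"
  proof
    fix m' assume "m' \<in> (\<lambda>(k, m). Poly_Mapping.single x k + m) ` (UNIV \<times> {m :: 'a \<Rightarrow>\<^sub>0 nat. keys m \<subseteq> A})"
    then obtain k m where m': "m' = Poly_Mapping.single x k + m" "keys m \<subseteq> A" by auto
    have "keys m' \<subseteq> keys (Poly_Mapping.single x k) \<union> keys m" unfolding m'(1) by (rule keys_add)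
    then show "m' \<in> {m. keys m \<subseteq> insert x A}" using m'(2) by (auto split: if_splits)
  qed
  have "keys (m - Poly_Mapping.single x (lookup m x)) \<subseteq> keys m - {x}" for m :: "'a \<Rightarrow>\<^sub>0 nat"
    by (auto simp: in_keys_iff lookup_minus lookup_single when_def split: if_splits)
  then show "(\<lambda>m. (lookup m x, m - Poly_Mapping.single x (lookup m x))) ` {m :: 'a \<Rightarrow>\<^sub>0 nat. keys m \<subseteq> insert x A}
      \<subseteq> UNIV \<times> {m. keys m \<subseteq> A}"
    by blast
qed

lemma mps_subst_qexp_keys_Q:
  assumes "\<sigma> Q = mps_var Q"
  shows "mps_sum (\<lambda>m. mps_smult (qexp N la m) (mono_eval \<sigma> m)) {m. keys m \<subseteq> {Q}} = qexp N (\<lambda>_. 0)"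
proof -
  have "qexp N la m = 0" if "keys m \<subseteq> {Q}" "m \<noteq> Poly_Mapping.single Q N" for m
  proof -
    have "m = Poly_Mapping.single Q (lookup m Q)"
      using that by (intro poly_mapping_eqI) (auto simp: lookup_single in_keys_iff when_def)
    then show ?thesis using that by (auto simp: qexp_apply)
  qed
  moreover have "mono_eval \<sigma> (Poly_Mapping.single Q N) = qexp N (\<lambda>_. 0)"
    using mono_eval_single_add[of Q 0 \<sigma> N] assms
    by (simp add: mono_eval_zero mps_mult_commute[of _ "mps_const 1"] mps_mult_1_left mps_var_Q_qexp mps_power_qexp)
  ultimately show ?thesis
    by (subst mps_sum_eq_single[of "Poly_Mapping.single Q N"])
       (auto simp: mps_smult_0_left mps_smult_1_left qexp_apply)
qed

lemma mps_subst_qexp_keys_subset: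
  assumes subst: "\<And>v. v \<noteq> Q \<Longrightarrow> \<sigma> v = linform (\<mu> v)" "\<sigma> Q = mps_var Q"
    and K: "finite K" "Q \<notin> K"
  shows "mps_sum (\<lambda>m. mps_smult (qexp N la m) (mono_eval \<sigma> m)) {m. keys m \<subseteq> insert Q K}
       = qexp N (\<lambda>w. \<Sum>v\<in>K. la v * \<mu> v w)"
  using K
proof (induction K rule: finite_induct)
  case empty
  then show ?case using mps_subst_qexp_keys_Q[of \<sigma>, OF subst(2)] by simp
next
  case (insert x K)
  have xQ: "x \<noteq> Q" using insert by auto
  let ?F = "\<lambda>m. mps_smult (qexp N la m) (mono_eval \<sigma> m)"
  let ?M = "{m::mono. keys m \<subseteq> insert Q K}"
  let ?E = "\<lambda>k. mps_smult (la x ^ k / fact k) (mps_power (linform (\<mu> x)) k)"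
  have hom: "homogeneous 1 (\<sigma> v)" for v by (metis subst homogeneous_var_Q homogeneous_linform)
  have lf1: "locally_finite ?E UNIV (\<lambda>k. k)"
    by (rule locally_finite_homogeneous) (auto intro: homogeneous_smult homogeneous_power homogeneous_linform)
  have lf2: "locally_finite ?F ?M mono_deg"
  proof (rule locally_finite_homogeneous)
    show "finite {m\<in>?M. mono_deg m \<le> D}" for D
      using finite_mono_deg_le[of "insert Q K" D] insert by simp
  qed (auto intro: homogeneous_smult homogeneous_mono_eval hom)
  have bij: "bij_betw (\<lambda>(k, m). Poly_Mapping.single x k + m) (UNIV \<times> ?M) {m. keys m \<subseteq> insert Q (insert x K)}"
    using bij_betw_single_add[of x "insert Q K"] insert xQ by (simp add: insert_commute)
  have "?F (Poly_Mapping.single x k + m) = mps_mult (?E k) (?F m)" if "m \<in> ?M" for k m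
  proof -
    have "x \<notin> keys m" using that insert xQ by auto
    then show ?thesis
      using xQ by (simp add: qexp_single_add mono_eval_single_add subst mps_mult_smult_left
          mps_mult_smult_right mps_smult_smult mult.commute)
  qed
  then have "mps_sum ?F {m. keys m \<subseteq> insert Q (insert x K)}
      = mps_sum (\<lambda>(k, m). mps_mult (?E k) (?F m)) (UNIV \<times> ?M)"
    unfolding mps_sum_reindex[OF bij] by (intro mps_sum_cong) auto
  also have "\<dots> = mps_mult (mps_sum ?E UNIV) (mps_sum ?F ?M)"
    by (rule mps_mult_sums[OF lf1 lf2, symmetric])
  also have "\<dots> = qexp N (\<lambda>w. \<Sum>v\<in>insert x K. la v * \<mu> v w)"
    using insert by (simp add: mps_exp_series_linform qexp_mult)
  finally show ?case .
qed

lemma mps_subst_qexp: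
  assumes subst: "\<And>v. v \<noteq> Q \<Longrightarrow> \<sigma> v = linform (\<mu> v)" "\<sigma> Q = mps_var Q"
    and K: "finite K" "Q \<notin> K" and la: "\<And>w. w \<notin> K \<Longrightarrow> w \<noteq> Q \<Longrightarrow> la w = 0"
  shows "mps_subst \<sigma> (qexp N la) = qexp N (\<lambda>w. \<Sum>v\<in>K. la v * \<mu> v w)"
proof -
  have "qexp N la m = 0" if "\<not> keys m \<subseteq> insert Q K" for m
    using that la qexp_nonzero_keys by blast
  then have "mps_subst \<sigma> (qexp N la) = mps_sum (\<lambda>m. mps_smult (qexp N la m) (mono_eval \<sigma> m)) {m. keys m \<subseteq> insert Q K}"
    unfolding mps_subst_def by (intro mps_sum_mono_neutral) (auto simp: mps_smult_0_left)
  also have "\<dots> = qexp N (\<lambda>w. \<Sum>v\<in>K. la v * \<mu> v w)"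
    by (rule mps_subst_qexp_keys_subset[of \<sigma> \<mu>, OF subst K])
  finally show ?thesis .
qed

section \<open>The partition relation\<close>

definition partition_subst :: "nat \<Rightarrow> var \<Rightarrow> mps" where
  "partition_subst l v = (case v of
       Q \<Rightarrow> mps_var Q
     | X j \<Rightarrow> Ysum (l + 1 - j)
     | Y j \<Rightarrow> mps_sub (Xv l (l + 1 - j)) (Xv l (l + 2 - j)))"

definition partition_subst_coeffs :: "nat \<Rightarrow> var \<Rightarrow> var \<Rightarrow> rat" where
  "partition_subst_coeffs l v = (case v of Q \<Rightarrow> (\<lambda>_. 0) | X j \<Rightarrow> dual_Y_coeffs l j | Y j \<Rightarrow> dual_X_coeffs l j)"

lemma partition_subst_linform: "v \<noteq> Q \<Longrightarrow> partition_subst l v = linform (partition_subst_coeffs l v)"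
  by (cases v)
     (simp_all add: partition_subst_def partition_subst_coeffs_def dual_X_linform[symmetric] dual_Y_linform[symmetric])

lemma sum_Tvars_pair_coeffs_coord:
  assumes "length u = l"
  shows "(\<Sum>w'\<in>Tvars l. pair_coeffs (\<lambda>j. coord (Y j)) (\<lambda>j. coord (X j)) u v w' * \<mu> w' w)
       = pair_coeffs (\<lambda>j. \<mu> (Y j)) (\<lambda>j. \<mu> (X j)) u v w"
proof -
  let ?C = "pair_coeffs (\<lambda>j. coord (Y j)) (\<lambda>j. coord (X j)) u v"
  have "(\<Sum>w'\<in>Tvars l. ?C w' * \<mu> w' w)
      = (\<Sum>i<l. ?C (X (Suc i)) * \<mu> (X (Suc i)) w) + (\<Sum>i<l. ?C (Y (Suc i)) * \<mu> (Y (Suc i)) w)"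
    unfolding Tvars_image by (subst sum.union_disjoint) (auto simp: sum.reindex inj_on_def)
  also have "\<dots> = (\<Sum>i<l. of_nat (v!i) * \<mu> (X (Suc i)) w) + (\<Sum>i<l. of_nat (u!i) * \<mu> (Y (Suc i)) w)"
    using assms by (simp add: pair_coeffs_coord_X pair_coeffs_coord_Y)
  also have "\<dots> = pair_coeffs (\<lambda>j. \<mu> (Y j)) (\<lambda>j. \<mu> (X j)) u v w"
    using assms by (simp add: pair_coeffs_def sum.distrib)
  finally show ?thesis .
qed

lemma Tgen_partition_relation: "Tgen l = mps_subst (partition_subst l) (Tgen l)"
proof -
  let ?C = "\<lambda>u v. pair_coeffs (\<lambda>j. coord (Y j)) (\<lambda>j. coord (X j)) u v"
  let ?T = "\<lambda>(u,v). qexp (pair_weight u v) (?C u v)"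
  have subst: "\<And>v. v \<noteq> Q \<Longrightarrow> partition_subst l v = linform (partition_subst_coeffs l v)"
    "partition_subst l Q = mps_var Q"
    by (fact partition_subst_linform) (simp add: partition_subst_def)
  have hom: "homogeneous 1 (partition_subst l v)" for v
    by (metis subst homogeneous_var_Q homogeneous_linform)
  have QT: "Q \<notin> Tvars l" by (simp add: Tvars_def)
  have supp: "keys m \<subseteq> insert Q (Tvars l)" if "x \<in> pair_index l" "?T x m \<noteq> 0" for x m
    using that qexp_nonzero_keys pair_coeffs_coord_other by (fastforce simp: pair_index_def decr_tuples_def)
  have "mps_subst (partition_subst l) (Tgen l) = mps_sum (\<lambda>x. mps_subst (partition_subst l) (?T x)) (pair_index l)"
    unfolding Tgen_eq_pair_sum
    by (rule mps_subst_mps_sum[OF locally_finite_pair_index finite_Tvars[THEN finite.insertI] supp hom])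
  also have "\<dots> = mps_sum (\<lambda>(u,v). qexp (pair_weight u v) (pair_coeffs (dual_X_coeffs l) (dual_Y_coeffs l) u v)) (pair_index l)"
  proof (rule mps_sum_cong)
    fix x assume "x \<in> pair_index l"
    then obtain u v where x: "x = (u, v)" and lu: "length u = l"
      by (auto simp: pair_index_def decr_tuples_def)
    have "mps_subst (partition_subst l) (qexp (pair_weight u v) (?C u v))
        = qexp (pair_weight u v) (\<lambda>w. \<Sum>w'\<in>Tvars l. ?C u v w' * partition_subst_coeffs l w' w)"
      by (rule mps_subst_qexp[of _ "partition_subst_coeffs l", OF subst finite_Tvars QT])
         (use pair_coeffs_coord_other lu in auto)
    also have "\<dots> = qexp (pair_weight u v) (pair_coeffs (dual_X_coeffs l) (dual_Y_coeffs l) u v)"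
      using lu by (simp add: sum_Tvars_pair_coeffs_coord partition_subst_coeffs_def)
    finally show "mps_subst (partition_subst l) (?T x)
        = (\<lambda>(u,v). qexp (pair_weight u v) (pair_coeffs (dual_X_coeffs l) (dual_Y_coeffs l) u v)) x"
      by (simp add: x)
  qed
  also have "\<dots> = Tgen l" by (simp add: pair_sum_conjugate Tgen_eq_pair_sum)
  finally show ?thesis ..
qed

theorem theorem2p3:
  fixes l :: nat
  assumes "1 \<le> l"
  shows "Tgen l = mps_sum (\<lambda>u. mps_listprod
                    (map (\<lambda>j. mps_mult (En (u ! (j - 1)) (mps_var (Y j)))
                                      (Ln (u ! (j - 1)) (mps_var (X j)))) [1..<l+1]))
                  (decr_tuples l)
       \<and> Tgen l = mps_sum (\<lambda>u. mps_listprod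
                    (map (\<lambda>j. mps_mult (En (u ! (j - 1)) (mps_sub (Xv l (l + 1 - j)) (Xv l (l + 2 - j))))
                                      (Ln (u ! (j - 1)) (Ysum (l - j + 1)))) [1..<l+1]))
                  (decr_tuples l)
       \<and> Tgen l = mps_subst (\<lambda>v. case v of
                       Q \<Rightarrow> mps_var Q
                     | X j \<Rightarrow> Ysum (l + 1 - j)
                     | Y j \<Rightarrow> mps_sub (Xv l (l + 1 - j)) (Xv l (l + 2 - j))) (Tgen l)"
  using Tgen_eq_sum_En_Ln Tgen_eq_sum_En_Ln_dual Tgen_partition_relation[unfolded partition_subst_def[abs_def]]
  by blast

end
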